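(* For every $n$, the quotient lattice $S_n/\mathcal{H}(\{3412,2413\})_n$ is isomorphic to the subposet of the weak order on $S_n$ induced by the twisted Baxter permutations.
   Context: $S_n$: permutations of $[n]$ in one-line notation with the right weak order (inclusion of sets of inverted value pairs), a lattice. A permutation $x$ is a twisted Baxter permutation if (i) in every occurrence of the pattern 2413 in $x$, the entries playing the roles of "4" and "1" are not adjacent in $x$, and (ii) in every occurrence of 3412, the "4" and "1" are not adjacent. (Pattern $y\in S_k$ occurs in $x$ if there are $i_1<\dots<i_k$ with $x_{i_p}<x_{i_q}\iff y_p<y_q$.) Join-irreducibles of $S_n$ are permutations with exactly one descent; $\gamma_*$ is the unique element they cover. A congruence contracts $\gamma$ if $\gamma\equiv\gamma_*$. $u\times v=u_1\cdots u_p(p+v_1)\cdots(p+v_q)$; $\mathrm{st}(a_1..a_k)$ is the $u\in S_k$ with $u_i<u_j\iff a_i<a_j$. A family $\{\Theta_n\}_{n\ge0}$ of lattice congruences on $S_n$ is translational if $u\times v\equiv u'\times v'$ mod $\Theta_{p+q}$ iff $u\equiv u'$ mod $\Theta_p$ and $v\equiv v'$ mod $\Theta_q$; insertional if for every $p$-subset $Q\subseteq[p+q]$, with $\varphi_Q(u,v)$ the unique $x\in S_{p+q}$ with $\{x_1..x_p\}=Q$, $\mathrm{st}(x_1..x_p)=u$, $\mathrm{st}(x_{p+1}..x_{p+q})=v$, we have $u\equiv u',v\equiv v'\Rightarrow\varphi_Q(u,v)\equiv\varphi_Q(u',v')$; an $\mathcal{H}$-family if both. For a set $C$ of join-irreducibles,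 $\{\mathcal{H}(C)_n\}$ is the smallest $\mathcal{H}$-family contracting every element of $C$. The quotient $L/\Theta$ is the set of classes with $[a]\le[b]$ iff some $x\in[a],y\in[b]$ have $x\le y$. *)

theory Defs
  imports Main
begin

definition perms :: "nat \<Rightarrow> nat list set" where
  "perms n = {x. distinct x \<and> set x = {1..n}}"

definition inv_pairs :: "nat list \<Rightarrow> (nat \<times> nat) set" where
  "inv_pairs x = {(a, b). \<exists>i j. i < j \<and> j < length x \<and> x ! i = b \<and> x ! j = a \<and> a < b}"

definition weak_le :: "nat list \<Rightarrow> nat list \<Rightarrow> bool" where
  "weak_le x y \<longleftrightarrow> inv_pairs x \<subseteq> inv_pairs y"

definition weak_lt :: "nat list \<Rightarrow> nat list \<Rightarrow> bool" where
  "weak_lt x y \<longleftrightarrow> weak_le x y \<and> x \<noteq> y"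

definition weak_join :: "nat \<Rightarrow> nat list \<Rightarrow> nat list \<Rightarrow> nat list" where
  "weak_join n x y = (THE z. z \<in> perms n \<and> weak_le x z \<and> weak_le y z \<and>
      (\<forall>w \<in> perms n. weak_le x w \<and> weak_le y w \<longrightarrow> weak_le z w))"

definition weak_meet :: "nat \<Rightarrow> nat list \<Rightarrow> nat list \<Rightarrow> nat list" where
  "weak_meet n x y = (THE z. z \<in> perms n \<and> weak_le z x \<and> weak_le z y \<and>
      (\<forall>w \<in> perms n. weak_le w x \<and> weak_le w y \<longrightarrow> weak_le w z))"

definition descents :: "nat list \<Rightarrow> nat set" where
  "descents x = {i. Suc i < length x \<and> x ! Suc i < x ! i}"

definition join_irreducible :: "nat list \<Rightarrow> bool" where
  "join_irreducible x \<longleftrightarrow> card (descents x) = 1"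

definition weak_covered :: "nat \<Rightarrow> nat list \<Rightarrow> nat list \<Rightarrow> bool" where
  "weak_covered n y x \<longleftrightarrow> y \<in> perms n \<and> x \<in> perms n \<and> weak_lt y x \<and>
      \<not> (\<exists>z \<in> perms n. weak_lt y z \<and> weak_lt z x)"

(* gamma_*: the unique element covered by a join-irreducible gamma *)
definition lower_star :: "nat list \<Rightarrow> nat list" where
  "lower_star g = (THE y. weak_covered (length g) y g)"

definition lattice_congruence :: "nat \<Rightarrow> (nat list \<times> nat list) set \<Rightarrow> bool" where
  "lattice_congruence n R \<longleftrightarrow> equiv (perms n) R \<and>
     (\<forall>x y z. (x, y) \<in> R \<and> z \<in> perms n \<longrightarrow>
        (weak_join n x z, weak_join n y z) \<in> R \<and> (weak_meet n x z, weak_meet n y z) \<in> R)"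

definition cross :: "nat list \<Rightarrow> nat list \<Rightarrow> nat list" where
  "cross u v = u @ map (\<lambda>i. length u + i) v"

definition st :: "nat list \<Rightarrow> nat list" where
  "st a = map (\<lambda>ai. card {aj \<in> set a. aj \<le> ai}) a"

definition phi :: "nat \<Rightarrow> nat \<Rightarrow> nat set \<Rightarrow> nat list \<Rightarrow> nat list \<Rightarrow> nat list" where
  "phi p q Q u v = (THE x. x \<in> perms (p + q) \<and> set (take p x) = Q \<and>
      st (take p x) = u \<and> st (drop p x) = v)"

definition translational :: "(nat \<Rightarrow> (nat list \<times> nat list) set) \<Rightarrow> bool" where
  "translational \<Theta> \<longleftrightarrow> (\<forall>p q u u' v v'. u \<in> perms p \<and> u' \<in> perms p \<and> v \<in> perms q \<and> v' \<in> perms q \<longrightarrow>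
      ((cross u v, cross u' v') \<in> \<Theta> (p + q) \<longleftrightarrow> (u, u') \<in> \<Theta> p \<and> (v, v') \<in> \<Theta> q))"

definition insertional :: "(nat \<Rightarrow> (nat list \<times> nat list) set) \<Rightarrow> bool" where
  "insertional \<Theta> \<longleftrightarrow> (\<forall>p q Q u u' v v'. Q \<subseteq> {1..p + q} \<and> card Q = p \<and>
      (u, u') \<in> \<Theta> p \<and> (v, v') \<in> \<Theta> q \<longrightarrow> (phi p q Q u v, phi p q Q u' v') \<in> \<Theta> (p + q))"

definition H_family :: "(nat \<Rightarrow> (nat list \<times> nat list) set) \<Rightarrow> bool" where
  "H_family \<Theta> \<longleftrightarrow> (\<forall>n. lattice_congruence n (\<Theta> n)) \<and> translational \<Theta> \<and> insertional \<Theta>"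

definition contracts :: "(nat \<Rightarrow> (nat list \<times> nat list) set) \<Rightarrow> nat list \<Rightarrow> bool" where
  "contracts \<Theta> g \<longleftrightarrow> (g, lower_star g) \<in> \<Theta> (length g)"

definition H_gen :: "nat list set \<Rightarrow> nat \<Rightarrow> (nat list \<times> nat list) set" where
  "H_gen C n = {(x, y). \<forall>\<Theta>. H_family \<Theta> \<and> (\<forall>g \<in> C. contracts \<Theta> g) \<longrightarrow> (x, y) \<in> \<Theta> n}"

definition quot_le :: "nat list set \<Rightarrow> nat list set \<Rightarrow> bool" where
  "quot_le A B \<longleftrightarrow> (\<exists>x \<in> A. \<exists>y \<in> B. weak_le x y)"

definition occurs_at :: "nat list \<Rightarrow> nat list \<Rightarrow> nat list \<Rightarrow> bool" where
  "occurs_at x y ix \<longleftrightarrow> length ix = length y \<and> sorted_wrt (<) ix \<and> (\<forall>i \<in> set ix. i < length x) \<and>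
     (\<forall>p < length y. \<forall>q < length y. x ! (ix ! p) < x ! (ix ! q) \<longleftrightarrow> y ! p < y ! q)"

definition twisted_baxter :: "nat list \<Rightarrow> bool" where
  "twisted_baxter x \<longleftrightarrow>
     (\<forall>ix. occurs_at x [2,4,1,3] ix \<longrightarrow> ix ! 2 \<noteq> Suc (ix ! 1)) \<and>
     (\<forall>ix. occurs_at x [3,4,1,2] ix \<longrightarrow> ix ! 2 \<noteq> Suc (ix ! 1))"

end

(*
  For a set A of value pairs, the low fan consists of the pairs (p,q) with (p,c) in A for all
  p < c <= q, and the high fan of those with (c,q) in A for all p <= c < q. Call permutations
  equivalent when their inversion sets have the same low and high fans.

  Inversion sets are exactly the transitive and cotransitive sets of pairs, so the inversion set of
  a join is the transitive closure of the union, and that of a meet is described dually. The fans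
  of such closures are determined by the fans of the pieces, hence the equivalence is a lattice
  congruence. Swapping the adjacent "4" and "1" of an occurrence of 2413 or 3412 deletes one
  inversion and keeps both fans, so every class contains a twisted Baxter permutation. Conversely
  the inversion set of a twisted Baxter permutation is generated by its fans under transitive
  closure; this makes it the unique twisted Baxter permutation and the bottom of its class, and
  classes compare like their bottoms. Transporting the swaps through concatenation and insertion
  gives the translational and insertional properties, and 3412 and 2413 are contracted.

  For minimality, an H-family contracting 3412 and 2413 contracts such a swap when the pattern
  occupies four consecutive positions, by insertion; joins and meets with adjacent transpositions
  away from the pattern move its outer letters inwards, so every swap, and with it the whole
  equivalence, is contracted.
*)

theory Submission
  imports Defs "HOL-Combinatorics.Transposition"
begin

section \<open>Inversion sets of permutations\<close>

definition precedes :: "nat list \<Rightarrow> nat \<Rightarrow> nat \<Rightarrow> bool" where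
  "precedes x u v \<longleftrightarrow> (\<exists>i j. i < j \<and> j < length x \<and> x!i = u \<and> x!j = v)"

definition value_pairs :: "nat \<Rightarrow> (nat \<times> nat) set" where
  "value_pairs n = {(a,b). 1 \<le> a \<and> a < b \<and> b \<le> n}"

definition cotransitive :: "(nat \<times> nat) set \<Rightarrow> bool" where
  "cotransitive A \<longleftrightarrow> (\<forall>a b c. a < b \<longrightarrow> b < c \<longrightarrow> (a,c) \<in> A \<longrightarrow> (a,b) \<in> A \<or> (b,c) \<in> A)"

definition inv_order :: "(nat \<times> nat) set \<Rightarrow> nat \<Rightarrow> nat \<Rightarrow> bool" where
  "inv_order A u v \<longleftrightarrow> (u < v \<and> (u,v) \<notin> A) \<or> (v < u \<and> (v,u) \<in> A)"

lemma inv_pairs_precedes: "inv_pairs x = {(a,b). a < b \<and> precedes x b a}"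
  unfolding inv_pairs_def precedes_def by auto

lemma length_perm: "x \<in> perms n \<Longrightarrow> length x = n"
  unfolding perms_def by (metis (mono_tags) card_atLeastAtMost diff_Suc_1 distinct_card mem_Collect_eq)

lemma distinct_perm: "x \<in> perms n \<Longrightarrow> distinct x"
  unfolding perms_def by auto

lemma set_perm: "x \<in> perms n \<Longrightarrow> set x = {1..n}"
  unfolding perms_def by auto

lemma precedes_in_set: "precedes x u v \<Longrightarrow> u \<in> set x \<and> v \<in> set x"
  unfolding precedes_def by auto

lemma precedes_asym:
  assumes "distinct x" "precedes x u v"
  shows "\<not> precedes x v u"
proof
  assume "precedes x v u"
  then obtain i' j' where 1: "i' < j'" "j' < length x" "x!i' = v" "x!j' = u"
    unfolding precedes_def by auto
  from assms(2) obtain i j where 2: "i < j" "j < length x" "x!i = u" "x!j = v"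
    unfolding precedes_def by auto
  have "i = j'" "j = i'" using 1 2 assms(1) by (auto simp: nth_eq_iff_index_eq)
  then show False using 1 2 by auto
qed

lemma precedes_irrefl: "distinct x \<Longrightarrow> \<not> precedes x u u"
  using precedes_asym by blast

lemma precedes_trans:
  assumes "distinct x" "precedes x u v" "precedes x v w"
  shows "precedes x u w"
proof -
  obtain i j where 1: "i < j" "j < length x" "x!i = u" "x!j = v"
    using assms(2) unfolding precedes_def by auto
  obtain i' j' where 2: "i' < j'" "j' < length x" "x!i' = v" "x!j' = w"
    using assms(3) unfolding precedes_def by auto
  have "j = i'" using 1 2 assms(1) by (auto simp: nth_eq_iff_index_eq)
  then show ?thesis using 1 2 unfolding precedes_def by (intro exI[of _ i] exI[of _ j']) auto
qed

lemma precedes_total: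
  assumes "u \<in> set x" "v \<in> set x" "u \<noteq> v"
  shows "precedes x u v \<or> precedes x v u"
proof -
  obtain i j where "i < length x" "x!i = u" "j < length x" "x!j = v"
    using assms(1,2) by (auto simp: in_set_conv_nth)
  then show ?thesis using assms(3) unfolding precedes_def by (metis linorder_neqE_nat)
qed

lemma precedes_nth_iff:
  assumes "distinct x" "k < length x"
  shows "precedes x u (x!k) \<longleftrightarrow> u \<in> set (take k x)"
proof
  assume "precedes x u (x!k)"
  then obtain i j where "i < j" "j < length x" "x!i = u" "x!j = x!k"
    unfolding precedes_def by auto
  moreover from this have "j = k" using assms by (auto simp: nth_eq_iff_index_eq)
  ultimately show "u \<in> set (take k x)" by (auto simp: in_set_conv_nth intro!: exI[of _ i])
next
  assume "u \<in> set (take k x)"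
  then obtain i where "i < k" "x!i = u" using assms by (auto simp: in_set_conv_nth)
  then show "precedes x u (x!k)" using assms unfolding precedes_def by auto
qed

lemma list_eq_if_precedes_eq:
  assumes "distinct x" "distinct y" "set x = set y"
    and "\<And>u v. precedes x u v \<longleftrightarrow> precedes y u v"
  shows "x = y"
proof (rule nth_equalityI)
  show len: "length x = length y" using assms by (metis distinct_card)
  fix k assume k: "k < length x"
  then obtain k' where k': "k' < length y" "y!k' = x!k"
    using assms(3) by (metis in_set_conv_nth nth_mem)
  have "{u. precedes x u (x!k)} = set (take k x)" "{u. precedes y u (y!k')} = set (take k' y)"
    using precedes_nth_iff assms(1,2) k k'(1) by auto
  then have "card (set (take k x)) = card (set (take k' y))" using assms(4) k' by simp
  then have "k = k'" using k k' assms(1,2) by (simp add: distinct_card)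
  then show "x!k = y!k" using k' by simp
qed

lemma inv_pairs_subset_value_pairs: "x \<in> perms n \<Longrightarrow> inv_pairs x \<subseteq> value_pairs n"
  unfolding inv_pairs_precedes value_pairs_def using set_perm precedes_in_set by fastforce

lemma trans_inv_pairs: "distinct x \<Longrightarrow> trans (inv_pairs x)"
  unfolding inv_pairs_precedes trans_def using precedes_trans by fastforce

lemma precedes_iff_inv_order:
  assumes "x \<in> perms n" "u \<in> {1..n}" "v \<in> {1..n}"
  shows "precedes x u v \<longleftrightarrow> inv_order (inv_pairs x) u v"
proof (cases "u = v")
  case True
  then show ?thesis using precedes_irrefl distinct_perm assms(1) unfolding inv_order_def by auto
next
  case False
  then have "precedes x u v \<or> precedes x v u"
    using precedes_total assms set_perm by auto
  then show ?thesis
    using precedes_asym[OF distinct_perm[OF assms(1)]] False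
    unfolding inv_pairs_precedes inv_order_def by auto
qed

lemma cotransitive_inv_pairs:
  assumes "x \<in> perms n"
  shows "cotransitive (inv_pairs x)"
  unfolding cotransitive_def
proof (intro allI impI)
  fix a b c assume abc: "a < b" "b < c" "(a,c) \<in> inv_pairs x"
  then have "precedes x c a" unfolding inv_pairs_precedes by auto
  then have "a \<in> {1..n}" "c \<in> {1..n}" using precedes_in_set set_perm[OF assms] by auto
  then have "b \<in> {1..n}" using abc by auto
  show "(a,b) \<in> inv_pairs x \<or> (b,c) \<in> inv_pairs x"
    using \<open>precedes x c a\<close> precedes_trans[OF distinct_perm[OF assms]]
      precedes_iff_inv_order[OF assms] \<open>a \<in> {1..n}\<close> \<open>b \<in> {1..n}\<close> \<open>c \<in> {1..n}\<close> abc
    unfolding inv_order_def by (metis less_asym)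
qed

lemma perm_eq_if_inv_pairs_eq:
  assumes "x \<in> perms n" "y \<in> perms n" "inv_pairs x = inv_pairs y"
  shows "x = y"
proof (rule list_eq_if_precedes_eq)
  show "distinct x" "distinct y" "set x = set y" using assms distinct_perm set_perm by auto
  fix u v
  show "precedes x u v \<longleftrightarrow> precedes y u v"
  proof (cases "u \<in> {1..n} \<and> v \<in> {1..n}")
    case True
    then show ?thesis using precedes_iff_inv_order assms by metis
  next
    case False
    then show ?thesis using precedes_in_set assms set_perm by blast
  qed
qed

lemma weak_le_antisym:
  "x \<in> perms n \<Longrightarrow> y \<in> perms n \<Longrightarrow> weak_le x y \<Longrightarrow> weak_le y x \<Longrightarrow> x = y"
  unfolding weak_le_def using perm_eq_if_inv_pairs_eq by blast

lemma inv_order_trans: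
  assumes "trans A" "cotransitive A" "inv_order A u v" "inv_order A v w"
  shows "inv_order A u w"
proof -
  have ct: "(a,b) \<in> A \<or> (b,c) \<in> A" if "a < b" "b < c" "(a,c) \<in> A" for a b c
    using assms(2) that unfolding cotransitive_def by blast
  have tr: "(a,c) \<in> A" if "(a,b) \<in> A" "(b,c) \<in> A" for a b c
    using assms(1) that unfolding trans_def by blast
  have "u \<noteq> v" "v \<noteq> w" using assms(3,4) unfolding inv_order_def by auto
  then consider "u < v" "v < w" | "u < w" "w < v" | "v < u" "u < w" | "v < w" "w < u"
    | "w < u" "u < v" | "w < v" "v < u" | "u = w"
    by linarith
  then show ?thesis
  proof cases
    case 1 then show ?thesis using assms(3,4) ct[of u v w] unfolding inv_order_def by auto
  next
    case 2 then show ?thesis using assms(3,4) tr[of u w v] unfolding inv_order_def by auto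
  next
    case 3 then show ?thesis using assms(3,4) tr[of v u w] unfolding inv_order_def by auto
  next
    case 4 then show ?thesis using assms(3,4) ct[of v w u] unfolding inv_order_def by auto
  next
    case 5 then show ?thesis using assms(3,4) ct[of w u v] unfolding inv_order_def by auto
  next
    case 6 then show ?thesis using assms(3,4) tr[of w v u] unfolding inv_order_def by auto
  next
    case 7 then show ?thesis using assms(3,4) unfolding inv_order_def by auto
  qed
qed

lemma exists_perm_of_strict_order:
  assumes trans: "\<And>u v w. P u v \<Longrightarrow> P v w \<Longrightarrow> P u w"
    and irrefl: "\<And>u. \<not> P u u" and total: "\<And>u v. u \<noteq> v \<Longrightarrow> P u v \<or> P v u"
  obtains x where "x \<in> perms n" "\<And>u v. u \<in> {1..n} \<Longrightarrow> v \<in> {1..n} \<Longrightarrow> precedes x u v \<longleftrightarrow> P u v"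
proof -
  define r where "r u = card {v \<in> {1..n}. P v u}" for u
  have r_less: "r u < r v" if "P u v" "u \<in> {1..n}" for u v
  proof -
    have "{w \<in> {1..n}. P w u} \<subset> {w \<in> {1..n}. P w v}"
      using that trans irrefl by blast
    then show ?thesis unfolding r_def by (intro psubset_card_mono) auto
  qed
  define x where "x = sort_key r [1..<Suc n]"
  have x: "x \<in> perms n" unfolding x_def perms_def by auto
  have sorted: "r u \<le> r v" if "precedes x u v" for u v
    using that sorted_nth_mono[of "map r x"] unfolding precedes_def x_def by fastforce
  have "precedes x u v \<longleftrightarrow> P u v" if "u \<in> {1..n}" "v \<in> {1..n}" for u v
  proof
    assume "precedes x u v"
    then have "u \<noteq> v" "\<not> r v < r u"
      using precedes_irrefl[OF distinct_perm[OF x]] sorted by (auto simp: not_less)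
    then show "P u v" using total r_less that by blast
  next
    assume "P u v"
    then have "u \<noteq> v" "\<not> r v \<le> r u" using irrefl r_less that by (auto simp: not_le)
    then show "precedes x u v" using precedes_total[of u x v] sorted set_perm[OF x] that by blast
  qed
  then show thesis using that x by blast
qed

lemma exists_perm_with_inv_pairs:
  assumes "A \<subseteq> value_pairs n" "trans A" "cotransitive A"
  obtains x where "x \<in> perms n" "inv_pairs x = A"
proof -
  obtain x where x: "x \<in> perms n"
    and prec: "\<And>u v. u \<in> {1..n} \<Longrightarrow> v \<in> {1..n} \<Longrightarrow> precedes x u v \<longleftrightarrow> inv_order A u v"
  proof (rule exists_perm_of_strict_order[of "inv_order A" n])
    show "inv_order A u w" if "inv_order A u v" "inv_order A v w" for u v w
      using inv_order_trans[OF assms(2,3) that] .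
    show "\<not> inv_order A u u" for u
      unfolding inv_order_def by auto
    show "inv_order A u v \<or> inv_order A v u" if "u \<noteq> v" for u v
      using that unfolding inv_order_def by auto
  qed blast
  have "inv_pairs x = A"
  proof (intro set_eqI iffI)
    fix p assume "p \<in> inv_pairs x"
    then obtain a b where "p = (a,b)" "a < b" "precedes x b a" unfolding inv_pairs_precedes by auto
    moreover from this have "a \<in> {1..n}" "b \<in> {1..n}" using precedes_in_set set_perm[OF x] by auto
    ultimately show "p \<in> A" using prec unfolding inv_order_def by auto
  next
    fix p assume "p \<in> A"
    then obtain a b where "p = (a,b)" "a \<in> {1..n}" "b \<in> {1..n}" "a < b"
      using assms(1) unfolding value_pairs_def by auto
    then show "p \<in> inv_pairs x" using prec[of b a] \<open>p \<in> A\<close>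
      unfolding inv_pairs_precedes inv_order_def by auto
  qed
  then show thesis using that x by blast
qed

section \<open>Joins and meets in the weak order\<close>

definition increasing_rel :: "(nat \<times> nat) set \<Rightarrow> bool" where
  "increasing_rel A \<longleftrightarrow> (\<forall>a b. (a,b) \<in> A \<longrightarrow> a < b)"

definition noninv_pairs :: "nat \<Rightarrow> nat list \<Rightarrow> (nat \<times> nat) set" where
  "noninv_pairs n x = value_pairs n - inv_pairs x"

lemma increasing_rel_subset_value_pairs: "A \<subseteq> value_pairs n \<Longrightarrow> increasing_rel A"
  unfolding increasing_rel_def value_pairs_def by auto

lemma increasing_rel_inv_pairs: "increasing_rel (inv_pairs x)"
  unfolding increasing_rel_def inv_pairs_def by auto

lemma increasing_rel_Un: "increasing_rel A \<Longrightarrow> increasing_rel B \<Longrightarrow> increasing_rel (A \<union> B)"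
  unfolding increasing_rel_def by blast

lemma increasing_rel_trancl:
  assumes "increasing_rel M"
  shows "increasing_rel (M\<^sup>+)"
  unfolding increasing_rel_def
proof (intro allI impI)
  fix a b assume "(a,b) \<in> M\<^sup>+"
  then show "a < b"
    by (induction rule: trancl_induct) (use assms in \<open>auto simp: increasing_rel_def\<close>, fastforce)
qed

lemma cotransitive_Un: "cotransitive A \<Longrightarrow> cotransitive B \<Longrightarrow> cotransitive (A \<union> B)"
  unfolding cotransitive_def by blast

lemma cotransitive_trancl:
  assumes inc: "increasing_rel M" and ct: "cotransitive M"
  shows "cotransitive (M\<^sup>+)"
proof -
  have "\<forall>b. a < b \<longrightarrow> b < c \<longrightarrow> (a,b) \<in> M\<^sup>+ \<or> (b,c) \<in> M\<^sup>+" if "(a,c) \<in> M\<^sup>+" for a c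
    using that
  proof (induction rule: trancl_induct)
    case (base c)
    then show ?case using ct unfolding cotransitive_def by blast
  next
    case (step d c)
    show ?case
    proof (intro allI impI)
      fix b assume b: "a < b" "b < c"
      consider "b < d" | "b = d" | "d < b" by linarith
      then show "(a,b) \<in> M\<^sup>+ \<or> (b,c) \<in> M\<^sup>+"
      proof cases
        case 1
        then have "(a,b) \<in> M\<^sup>+ \<or> (b,d) \<in> M\<^sup>+" using step.IH b by auto
        then show ?thesis using step.hyps(2) by (meson trancl.trancl_into_trancl)
      next
        case 2
        then show ?thesis using step.hyps(1) by auto
      next
        case 3
        then have "(d,b) \<in> M \<or> (b,c) \<in> M" using ct step.hyps(2) b unfolding cotransitive_def by blast
        then show ?thesis using step.hyps(1) by (meson r_into_trancl' trancl.trancl_into_trancl)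
      qed
    qed
  qed
  then show ?thesis unfolding cotransitive_def by blast
qed

lemma trans_value_pairs: "trans (value_pairs n)"
  unfolding trans_def value_pairs_def by auto

lemma trancl_subset_value_pairs: "A \<subseteq> value_pairs n \<Longrightarrow> A\<^sup>+ \<subseteq> value_pairs n"
  using trancl_mono_subset trancl_id[OF trans_value_pairs] by metis

lemma trans_cotransitive_complement:
  assumes "A \<subseteq> value_pairs n" "trans A" "cotransitive A"
  shows "trans (value_pairs n - A)" "cotransitive (value_pairs n - A)"
proof -
  show "trans (value_pairs n - A)"
    unfolding trans_def
  proof (intro allI impI)
    fix a b c assume h: "(a,b) \<in> value_pairs n - A" "(b,c) \<in> value_pairs n - A"
    then have "(a,c) \<in> value_pairs n" "a < b" "b < c" unfolding value_pairs_def by auto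
    then show "(a,c) \<in> value_pairs n - A" using assms(3) h unfolding cotransitive_def by blast
  qed
  show "cotransitive (value_pairs n - A)"
    unfolding cotransitive_def
  proof (intro allI impI)
    fix a b c assume h: "a < b" "b < c" "(a,c) \<in> value_pairs n - A"
    then have "(a,b) \<in> value_pairs n" "(b,c) \<in> value_pairs n" unfolding value_pairs_def by auto
    then show "(a,b) \<in> value_pairs n - A \<or> (b,c) \<in> value_pairs n - A"
      using h assms(2) unfolding trans_def by blast
  qed
qed

lemma noninv_pairs_props:
  assumes "x \<in> perms n"
  shows "trans (noninv_pairs n x)" "cotransitive (noninv_pairs n x)"
    "noninv_pairs n x \<subseteq> value_pairs n" "value_pairs n - noninv_pairs n x = inv_pairs x"
  unfolding noninv_pairs_def
  using trans_cotransitive_complement[OF inv_pairs_subset_value_pairs[OF assms]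
      trans_inv_pairs[OF distinct_perm[OF assms]] cotransitive_inv_pairs[OF assms]]
    inv_pairs_subset_value_pairs[OF assms]
  by auto

lemma the_weak_join_eqI:
  assumes "w \<in> perms n" "weak_le x w" "weak_le z w"
    and "\<And>v. v \<in> perms n \<Longrightarrow> weak_le x v \<Longrightarrow> weak_le z v \<Longrightarrow> weak_le w v"
  shows "weak_join n x z = w"
  unfolding weak_join_def using assms weak_le_antisym by (intro the_equality) blast+

lemma the_weak_meet_eqI:
  assumes "w \<in> perms n" "weak_le w x" "weak_le w z"
    and "\<And>v. v \<in> perms n \<Longrightarrow> weak_le v x \<Longrightarrow> weak_le v z \<Longrightarrow> weak_le v w"
  shows "weak_meet n x z = w"
  unfolding weak_meet_def using assms weak_le_antisym by (intro the_equality) blast+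

lemma weak_join_inv_pairs:
  assumes x: "x \<in> perms n" and z: "z \<in> perms n"
  shows "weak_join n x z \<in> perms n" "inv_pairs (weak_join n x z) = (inv_pairs x \<union> inv_pairs z)\<^sup>+"
proof -
  let ?W = "(inv_pairs x \<union> inv_pairs z)\<^sup>+"
  have "?W \<subseteq> value_pairs n"
    using inv_pairs_subset_value_pairs[OF x] inv_pairs_subset_value_pairs[OF z]
    by (intro trancl_subset_value_pairs) auto
  moreover have "cotransitive ?W"
    by (intro cotransitive_trancl cotransitive_Un cotransitive_inv_pairs[OF x]
        cotransitive_inv_pairs[OF z] increasing_rel_Un increasing_rel_inv_pairs)
  ultimately obtain w where w: "w \<in> perms n" "inv_pairs w = ?W"
    using exists_perm_with_inv_pairs trans_trancl by metis
  have "weak_join n x z = w"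
  proof (rule the_weak_join_eqI[OF w(1)])
    show "weak_le x w" "weak_le z w" using w(2) unfolding weak_le_def by auto
    fix v assume v: "v \<in> perms n" "weak_le x v" "weak_le z v"
    then have "?W \<subseteq> (inv_pairs v)\<^sup>+" unfolding weak_le_def by (intro trancl_mono_subset) auto
    then show "weak_le w v"
      using w(2) trans_inv_pairs[OF distinct_perm[OF v(1)]] unfolding weak_le_def by simp
  qed
  then show "weak_join n x z \<in> perms n" "inv_pairs (weak_join n x z) = ?W" using w by auto
qed

lemma weak_meet_inv_pairs:
  assumes x: "x \<in> perms n" and z: "z \<in> perms n"
  shows "weak_meet n x z \<in> perms n"
    "inv_pairs (weak_meet n x z) = value_pairs n - (noninv_pairs n x \<union> noninv_pairs n z)\<^sup>+"
proof -
  let ?M = "(noninv_pairs n x \<union> noninv_pairs n z)\<^sup>+"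
  note nx = noninv_pairs_props[OF x] and nz = noninv_pairs_props[OF z]
  have sub: "noninv_pairs n x \<union> noninv_pairs n z \<subseteq> value_pairs n" using nx nz by auto
  have "cotransitive ?M"
    by (intro cotransitive_trancl cotransitive_Un nx nz increasing_rel_subset_value_pairs[OF sub])
  then have "trans (value_pairs n - ?M)" "cotransitive (value_pairs n - ?M)"
    using trans_cotransitive_complement[OF trancl_subset_value_pairs[OF sub] trans_trancl] by auto
  then obtain w where w: "w \<in> perms n" "inv_pairs w = value_pairs n - ?M"
    using exists_perm_with_inv_pairs[of "value_pairs n - ?M" n] by blast
  have "weak_meet n x z = w"
  proof (rule the_weak_meet_eqI[OF w(1)])
    show "weak_le w x" "weak_le w z"
      using w(2) nx(4) nz(4) unfolding weak_le_def by auto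
    fix v assume v: "v \<in> perms n" "weak_le v x" "weak_le v z"
    note nv = noninv_pairs_props[OF v(1)]
    have "noninv_pairs n x \<union> noninv_pairs n z \<subseteq> noninv_pairs n v"
      using v unfolding weak_le_def noninv_pairs_def by auto
    then have "?M \<subseteq> noninv_pairs n v" using trancl_mono_subset nv(1) trancl_id by metis
    then show "weak_le v w" using w(2) nv(4) unfolding weak_le_def by auto
  qed
  then show "weak_meet n x z \<in> perms n" "inv_pairs (weak_meet n x z) = value_pairs n - ?M"
    using w by auto
qed

lemma weak_join_eqI:
  assumes "x \<in> perms n" "y \<in> perms n" "w \<in> perms n" "inv_pairs w = inv_pairs x \<union> inv_pairs y"
  shows "weak_join n x y = w"
  using weak_join_inv_pairs[OF assms(1,2)] assms(3,4) trans_inv_pairs[OF distinct_perm[OF assms(3)]]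
    perm_eq_if_inv_pairs_eq by simp

lemma weak_meet_eqI:
  assumes "x \<in> perms n" "y \<in> perms n" "w \<in> perms n" "inv_pairs w = inv_pairs x \<inter> inv_pairs y"
  shows "weak_meet n x y = w"
proof -
  note nw = noninv_pairs_props[OF assms(3)]
  have "noninv_pairs n x \<union> noninv_pairs n y = noninv_pairs n w"
    using assms(4) unfolding noninv_pairs_def by auto
  then have "inv_pairs (weak_meet n x y) = inv_pairs w"
    using weak_meet_inv_pairs[OF assms(1,2)] nw(1,4) by simp
  then show ?thesis using perm_eq_if_inv_pairs_eq weak_meet_inv_pairs[OF assms(1,2)] assms(3) by blast
qed

section \<open>Fans and the twisted Baxter congruence\<close>

definition low_fan :: "(nat \<times> nat) set \<Rightarrow> (nat \<times> nat) set" where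
  "low_fan A = {(p,q). p < q \<and> (\<forall>c. p < c \<longrightarrow> c \<le> q \<longrightarrow> (p,c) \<in> A)}"

definition high_fan :: "(nat \<times> nat) set \<Rightarrow> (nat \<times> nat) set" where
  "high_fan A = {(p,q). p < q \<and> (\<forall>c. p \<le> c \<longrightarrow> c < q \<longrightarrow> (c,q) \<in> A)}"

lemma low_fan_mono: "A \<subseteq> B \<Longrightarrow> low_fan A \<subseteq> low_fan B"
  unfolding low_fan_def by blast

lemma high_fan_mono: "A \<subseteq> B \<Longrightarrow> high_fan A \<subseteq> high_fan B"
  unfolding high_fan_def by blast

lemma low_fan_subset: "low_fan A \<subseteq> A"
  unfolding low_fan_def by auto

lemma high_fan_subset: "high_fan A \<subseteq> A"
  unfolding high_fan_def by auto

lemma increasing_rel_low_fan: "increasing_rel (low_fan A)"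
  unfolding increasing_rel_def low_fan_def by auto

lemma increasing_rel_high_fan: "increasing_rel (high_fan A)"
  unfolding increasing_rel_def high_fan_def by auto

lemma low_fan_shorten: "(p,q) \<in> low_fan A \<Longrightarrow> p < c \<Longrightarrow> c \<le> q \<Longrightarrow> (p,c) \<in> low_fan A"
  unfolding low_fan_def by auto

lemma high_fan_shorten: "(p,q) \<in> high_fan A \<Longrightarrow> p \<le> c \<Longrightarrow> c < q \<Longrightarrow> (c,q) \<in> high_fan A"
  unfolding high_fan_def by auto

lemma cotransitive_low_fan_ending_at:
  assumes ct: "cotransitive I" and dq: "(d,q) \<in> I" "d < q"
  obtains c where "d \<le> c" "(c,q) \<in> low_fan I"
proof (cases "\<forall>c. d < c \<longrightarrow> c \<le> q \<longrightarrow> (d,c) \<in> I")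
  case True
  then show thesis using that[of d] dq unfolding low_fan_def by auto
next
  case False
  let ?C = "{c. d < c \<and> c \<le> q \<and> (d,c) \<notin> I}"
  have fin: "finite ?C" by (rule finite_subset[of _ "{..q}"]) auto
  define c0 where "c0 = Max ?C"
  have c0: "c0 \<in> ?C" unfolding c0_def using fin False by (intro Max_in) auto
  have c0_max: "(d,c) \<in> I" if "c0 < c" "c \<le> q" for c
  proof (rule ccontr)
    assume "(d,c) \<notin> I"
    then have "c \<in> ?C" using that c0 by auto
    then show False using Max_ge[OF fin] that(1) unfolding c0_def by fastforce
  qed
  have "c0 < q" using c0 dq by (cases "c0 = q") auto
  moreover have "(c0,c) \<in> I" if "c0 < c" "c \<le> q" for c
    using ct c0 c0_max[OF that] that unfolding cotransitive_def by blast
  ultimately have "(c0,q) \<in> low_fan I" unfolding low_fan_def by auto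
  then show thesis using that[of c0] c0 by auto
qed

lemma cotransitive_high_fan_starting_at:
  assumes ct: "cotransitive I" and pd: "(p,d) \<in> I" "p < d"
  obtains c where "c \<le> d" "(p,c) \<in> high_fan I"
proof (cases "\<forall>c. p \<le> c \<longrightarrow> c < d \<longrightarrow> (c,d) \<in> I")
  case True
  then show thesis using that[of d] pd unfolding high_fan_def by auto
next
  case False
  let ?C = "{c. p \<le> c \<and> c < d \<and> (c,d) \<notin> I}"
  have fin: "finite ?C" by (rule finite_subset[of _ "{..d}"]) auto
  define c0 where "c0 = Min ?C"
  have c0: "c0 \<in> ?C" unfolding c0_def using fin False by (intro Min_in) auto
  have c0_min: "(c,d) \<in> I" if "p \<le> c" "c < c0" for c
  proof (rule ccontr)
    assume "(c,d) \<notin> I"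
    then have "c \<in> ?C" using that c0 by auto
    then show False using Min_le[OF fin] that(2) unfolding c0_def by fastforce
  qed
  have "p < c0" using c0 pd by (cases "c0 = p") auto
  moreover have "(c,c0) \<in> I" if "p \<le> c" "c < c0" for c
    using ct c0 c0_min[OF that] that unfolding cotransitive_def by blast
  ultimately have "(p,c0) \<in> high_fan I" unfolding high_fan_def by auto
  then show thesis using that[of c0] c0 by auto
qed

text \<open>The fans of a join thus depend on each argument only through its fans.\<close>

lemma low_fan_trancl_Un:
  assumes iI: "increasing_rel I" and iJ: "increasing_rel J" and cI: "cotransitive I"
  shows "(p,q) \<in> low_fan ((I \<union> J)\<^sup>+) \<Longrightarrow> (p,q) \<in> (low_fan I \<union> J)\<^sup>+"
proof (induction q rule: less_induct)
  case (less q)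
  let ?W = "(I \<union> J)\<^sup>+"
  have iW: "increasing_rel ?W" by (intro increasing_rel_trancl increasing_rel_Un iI iJ)
  have "(p,q) \<in> ?W" using less.prems low_fan_subset by blast
  then obtain d where d: "(d,q) \<in> I \<union> J" "d = p \<or> (p,d) \<in> ?W"
    by (cases rule: tranclE) auto
  have "p \<le> d" "d < q" using d iW iI iJ unfolding increasing_rel_def by fastforce+
  obtain c where c: "p \<le> c" "(c,q) \<in> low_fan I \<union> J"
  proof (cases "(d,q) \<in> J")
    case True
    then show thesis using that \<open>p \<le> d\<close> by blast
  next
    case False
    then obtain c where "d \<le> c" "(c,q) \<in> low_fan I"
      using cotransitive_low_fan_ending_at[OF cI] d(1) \<open>d < q\<close> by blast
    then show thesis using \<open>p \<le> d\<close> by (meson UnI1 order_trans that)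
  qed
  show ?case
  proof (cases "c = p")
    case True
    then show ?thesis using c by auto
  next
    case False
    have "c < q" using c iJ increasing_rel_low_fan unfolding increasing_rel_def by blast
    then have "(p,c) \<in> (low_fan I \<union> J)\<^sup>+"
      using less.IH low_fan_shorten[OF less.prems] False c(1) by simp
    then show ?thesis using c(2) by (rule trancl_into_trancl)
  qed
qed

lemma high_fan_trancl_Un:
  assumes iI: "increasing_rel I" and iJ: "increasing_rel J" and cI: "cotransitive I"
  shows "(p,q) \<in> high_fan ((I \<union> J)\<^sup>+) \<Longrightarrow> (p,q) \<in> (high_fan I \<union> J)\<^sup>+"
proof (induction "q - p" arbitrary: p rule: less_induct)
  case (less p)
  let ?W = "(I \<union> J)\<^sup>+"
  have iW: "increasing_rel ?W" by (intro increasing_rel_trancl increasing_rel_Un iI iJ)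
  have "(p,q) \<in> ?W" using less.prems high_fan_subset by blast
  then obtain d where d: "(p,d) \<in> I \<union> J" "d = q \<or> (d,q) \<in> ?W"
    by (cases rule: converse_tranclE) auto
  have "d \<le> q" "p < d" using d iW iI iJ unfolding increasing_rel_def by fastforce+
  obtain c where c: "c \<le> q" "(p,c) \<in> high_fan I \<union> J"
  proof (cases "(p,d) \<in> J")
    case True
    then show thesis using that \<open>d \<le> q\<close> by blast
  next
    case False
    then obtain c where "c \<le> d" "(p,c) \<in> high_fan I"
      using cotransitive_high_fan_starting_at[OF cI] d(1) \<open>p < d\<close> by blast
    then show thesis using \<open>d \<le> q\<close> by (meson UnI1 order_trans that)
  qed
  show ?case
  proof (cases "c = q")
    case True
    then show ?thesis using c by auto
  next
    case False
    have "p < c" using c iJ increasing_rel_high_fan unfolding increasing_rel_def by blast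
    then have "(c,q) \<in> (high_fan I \<union> J)\<^sup>+"
      using less.hyps high_fan_shorten[OF less.prems] False c(1) by simp
    then show ?thesis by (rule trancl_into_trancl2[OF c(2)])
  qed
qed

lemma low_fan_trancl_Un_mono:
  assumes "increasing_rel I" "increasing_rel J" "cotransitive I" "low_fan I \<subseteq> K"
  shows "low_fan ((I \<union> J)\<^sup>+) \<subseteq> low_fan ((K \<union> J)\<^sup>+)"
proof (clarsimp simp: low_fan_def[of "(K \<union> J)\<^sup>+"])
  fix p q assume pq: "(p,q) \<in> low_fan ((I \<union> J)\<^sup>+)"
  have "(low_fan I \<union> J)\<^sup>+ \<subseteq> (K \<union> J)\<^sup>+" using assms(4) by (intro trancl_mono_subset) auto
  then show "p < q \<and> (\<forall>c. p < c \<longrightarrow> c \<le> q \<longrightarrow> (p,c) \<in> (K \<union> J)\<^sup>+)"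
    using low_fan_trancl_Un[OF assms(1-3)] low_fan_shorten[OF pq] pq unfolding low_fan_def by blast
qed

lemma high_fan_trancl_Un_mono:
  assumes "increasing_rel I" "increasing_rel J" "cotransitive I" "high_fan I \<subseteq> K"
  shows "high_fan ((I \<union> J)\<^sup>+) \<subseteq> high_fan ((K \<union> J)\<^sup>+)"
proof (clarsimp simp: high_fan_def[of "(K \<union> J)\<^sup>+"])
  fix p q assume pq: "(p,q) \<in> high_fan ((I \<union> J)\<^sup>+)"
  have "(high_fan I \<union> J)\<^sup>+ \<subseteq> (K \<union> J)\<^sup>+" using assms(4) by (intro trancl_mono_subset) auto
  then show "p < q \<and> (\<forall>c. p \<le> c \<longrightarrow> c < q \<longrightarrow> (c,q) \<in> (K \<union> J)\<^sup>+)"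
    using high_fan_trancl_Un[OF assms(1-3)] high_fan_shorten[OF pq] pq unfolding high_fan_def by blast
qed

lemma increasing_rel_trancl_first_step:
  assumes "increasing_rel M" "(p,c) \<in> M\<^sup>+"
  obtains d where "p < d" "d \<le> c" "(p,d) \<in> M"
  using assms(2)
proof (cases rule: converse_tranclE)
  assume "(p,c) \<in> M"
  then show thesis using that assms(1) unfolding increasing_rel_def by auto
next
  fix d assume "(p,d) \<in> M" "(d,c) \<in> M\<^sup>+"
  then show thesis
    using that[of d] assms(1) increasing_rel_trancl[OF assms(1)] unfolding increasing_rel_def
    by fastforce
qed

lemma increasing_rel_trancl_last_step:
  assumes "increasing_rel M" "(c,q) \<in> M\<^sup>+"
  obtains d where "c \<le> d" "d < q" "(d,q) \<in> M"
  using assms(2)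
proof (cases rule: tranclE)
  case base
  then show thesis using that assms(1) unfolding increasing_rel_def by auto
next
  case (step d)
  then show thesis
    using that[of d] assms(1) increasing_rel_trancl[OF assms(1)] unfolding increasing_rel_def
    by fastforce
qed

lemma low_fan_Diff_trancl_Un:
  assumes "increasing_rel (N1 \<union> N2)"
  shows "low_fan (U - (N1 \<union> N2)\<^sup>+) = low_fan (U - N1) \<inter> low_fan (U - N2)"
proof
  show "low_fan (U - (N1 \<union> N2)\<^sup>+) \<subseteq> low_fan (U - N1) \<inter> low_fan (U - N2)"
    by (intro Int_greatest low_fan_mono) auto
  show "low_fan (U - N1) \<inter> low_fan (U - N2) \<subseteq> low_fan (U - (N1 \<union> N2)\<^sup>+)"
  proof
    fix pq assume h: "pq \<in> low_fan (U - N1) \<inter> low_fan (U - N2)"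
    then obtain p q where pq: "pq = (p,q)" "p < q" by (auto simp: low_fan_def)
    have "(p,c) \<in> U - (N1 \<union> N2)\<^sup>+" if "p < c" "c \<le> q" for c
    proof
      show "(p,c) \<in> U" using h pq that unfolding low_fan_def by auto
      show "(p,c) \<notin> (N1 \<union> N2)\<^sup>+"
      proof
        assume "(p,c) \<in> (N1 \<union> N2)\<^sup>+"
        then obtain d where "p < d" "d \<le> c" "(p,d) \<in> N1 \<union> N2"
          using increasing_rel_trancl_first_step[OF assms] by blast
        then show False using h pq that unfolding low_fan_def by auto
      qed
    qed
    then show "pq \<in> low_fan (U - (N1 \<union> N2)\<^sup>+)" using pq unfolding low_fan_def by auto
  qed
qed

lemma high_fan_Diff_trancl_Un:
  assumes "increasing_rel (N1 \<union> N2)"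
  shows "high_fan (U - (N1 \<union> N2)\<^sup>+) = high_fan (U - N1) \<inter> high_fan (U - N2)"
proof
  show "high_fan (U - (N1 \<union> N2)\<^sup>+) \<subseteq> high_fan (U - N1) \<inter> high_fan (U - N2)"
    by (intro Int_greatest high_fan_mono) auto
  show "high_fan (U - N1) \<inter> high_fan (U - N2) \<subseteq> high_fan (U - (N1 \<union> N2)\<^sup>+)"
  proof
    fix pq assume h: "pq \<in> high_fan (U - N1) \<inter> high_fan (U - N2)"
    then obtain p q where pq: "pq = (p,q)" "p < q" by (auto simp: high_fan_def)
    have "(c,q) \<in> U - (N1 \<union> N2)\<^sup>+" if "p \<le> c" "c < q" for c
    proof
      show "(c,q) \<in> U" using h pq that unfolding high_fan_def by auto
      show "(c,q) \<notin> (N1 \<union> N2)\<^sup>+"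
      proof
        assume "(c,q) \<in> (N1 \<union> N2)\<^sup>+"
        then obtain d where "c \<le> d" "d < q" "(d,q) \<in> N1 \<union> N2"
          using increasing_rel_trancl_last_step[OF assms] by blast
        then show False using h pq that unfolding high_fan_def by auto
      qed
    qed
    then show "pq \<in> high_fan (U - (N1 \<union> N2)\<^sup>+)" using pq unfolding high_fan_def by auto
  qed
qed

text \<open>This is the congruence \<open>\<H>({3412, 2413})\<close>, see \<open>H_gen_eq_tb_cong\<close>.\<close>

definition tb_cong :: "nat \<Rightarrow> (nat list \<times> nat list) set" where
  "tb_cong n = {(x,y). x \<in> perms n \<and> y \<in> perms n \<and>
     low_fan (inv_pairs x) = low_fan (inv_pairs y) \<and> high_fan (inv_pairs x) = high_fan (inv_pairs y)}"

lemma equiv_tb_cong: "equiv (perms n) (tb_cong n)"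
  unfolding equiv_def refl_on_def sym_def trans_def tb_cong_def by auto

lemma tb_cong_perms: "(x,y) \<in> tb_cong n \<Longrightarrow> x \<in> perms n \<and> y \<in> perms n"
  unfolding tb_cong_def by auto

lemma tb_cong_sym: "(x,y) \<in> tb_cong n \<Longrightarrow> (y,x) \<in> tb_cong n"
  unfolding tb_cong_def by auto

lemma tb_cong_trans: "(x,y) \<in> tb_cong n \<Longrightarrow> (y,z) \<in> tb_cong n \<Longrightarrow> (x,z) \<in> tb_cong n"
  unfolding tb_cong_def by auto

lemma tb_cong_weak_join:
  assumes "(x,y) \<in> tb_cong n" "z \<in> perms n"
  shows "(weak_join n x z, weak_join n y z) \<in> tb_cong n"
proof -
  have x: "x \<in> perms n" and y: "y \<in> perms n"
    and low: "low_fan (inv_pairs x) = low_fan (inv_pairs y)"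
    and high: "high_fan (inv_pairs x) = high_fan (inv_pairs y)"
    using assms(1) unfolding tb_cong_def by auto
  note jx = weak_join_inv_pairs[OF x assms(2)] and jy = weak_join_inv_pairs[OF y assms(2)]
  note inc = increasing_rel_inv_pairs and ct = cotransitive_inv_pairs[OF x] cotransitive_inv_pairs[OF y]
  have "low_fan (inv_pairs (weak_join n x z)) = low_fan (inv_pairs (weak_join n y z))"
    using jx jy low low_fan_subset
      low_fan_trancl_Un_mono[OF inc inc ct(1), of "inv_pairs y" z]
      low_fan_trancl_Un_mono[OF inc inc ct(2), of "inv_pairs x" z]
    by (metis subset_antisym)
  moreover have "high_fan (inv_pairs (weak_join n x z)) = high_fan (inv_pairs (weak_join n y z))"
    using jx jy high high_fan_subset
      high_fan_trancl_Un_mono[OF inc inc ct(1), of "inv_pairs y" z]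
      high_fan_trancl_Un_mono[OF inc inc ct(2), of "inv_pairs x" z]
    by (metis subset_antisym)
  ultimately show ?thesis using jx jy unfolding tb_cong_def by auto
qed

lemma tb_cong_weak_meet:
  assumes "(x,y) \<in> tb_cong n" "z \<in> perms n"
  shows "(weak_meet n x z, weak_meet n y z) \<in> tb_cong n"
proof -
  have x: "x \<in> perms n" and y: "y \<in> perms n"
    and low: "low_fan (inv_pairs x) = low_fan (inv_pairs y)"
    and high: "high_fan (inv_pairs x) = high_fan (inv_pairs y)"
    using assms(1) unfolding tb_cong_def by auto
  note mx = weak_meet_inv_pairs[OF x assms(2)] and my = weak_meet_inv_pairs[OF y assms(2)]
  note nx = noninv_pairs_props[OF x] and ny = noninv_pairs_props[OF y]
    and nz = noninv_pairs_props[OF assms(2)]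
  have inc: "increasing_rel (noninv_pairs n x \<union> noninv_pairs n z)"
    "increasing_rel (noninv_pairs n y \<union> noninv_pairs n z)"
    using nx ny nz by (auto intro: increasing_rel_subset_value_pairs)
  show ?thesis
    using mx my low high nx(4) ny(4) nz(4)
      low_fan_Diff_trancl_Un[OF inc(1)] low_fan_Diff_trancl_Un[OF inc(2)]
      high_fan_Diff_trancl_Un[OF inc(1)] high_fan_Diff_trancl_Un[OF inc(2)]
    unfolding tb_cong_def by simp
qed

lemma lattice_congruence_tb_cong: "lattice_congruence n (tb_cong n)"
  unfolding lattice_congruence_def using equiv_tb_cong tb_cong_weak_join tb_cong_weak_meet by blast

section \<open>Adjacent transpositions\<close>

definition swap_adj :: "nat list \<Rightarrow> nat \<Rightarrow> nat list" where
  "swap_adj x i = x[i := x!Suc i, Suc i := x!i]"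

lemma length_swap_adj [simp]: "length (swap_adj x i) = length x"
  unfolding swap_adj_def by simp

lemma nth_swap_adj:
  "Suc i < length x \<Longrightarrow> k < length x \<Longrightarrow> swap_adj x i ! k = x ! Transposition.transpose i (Suc i) k"
  unfolding swap_adj_def Transposition.transpose_def by (auto simp: nth_list_update)

lemma transpose_adj_less:
  "Suc i < m \<Longrightarrow> k < m \<Longrightarrow> Transposition.transpose i (Suc i) k < m"
  unfolding Transposition.transpose_def by auto

lemma transpose_adj_strict_mono:
  "k < l \<Longrightarrow> \<not> (k = i \<and> l = Suc i) \<Longrightarrow>
    Transposition.transpose i (Suc i) k < Transposition.transpose i (Suc i) l"
  unfolding Transposition.transpose_def by auto

lemma set_swap_adj: "Suc i < length x \<Longrightarrow> set (swap_adj x i) = set x"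
  unfolding swap_adj_def by simp

lemma perm_swap_adj: "x \<in> perms n \<Longrightarrow> Suc i < n \<Longrightarrow> swap_adj x i \<in> perms n"
  unfolding swap_adj_def perms_def using length_perm[of x n] by (simp add: perms_def)

lemma precedes_swap_adj:
  assumes d: "distinct x" and i: "Suc i < length x"
  shows "precedes (swap_adj x i) u v \<longleftrightarrow>
    (precedes x u v \<and> \<not> (u = x!i \<and> v = x!Suc i)) \<or> (u = x!Suc i \<and> v = x!i)"
    (is "?lhs \<longleftrightarrow> ?rhs")
proof
  let ?t = "Transposition.transpose i (Suc i)"
  assume ?lhs
  then obtain k l where kl: "k < l" "l < length x" "x ! ?t k = u" "x ! ?t l = v"
    unfolding precedes_def using nth_swap_adj[OF i] by auto
  have bounds: "?t k < length x" "?t l < length x" using kl transpose_adj_less[OF i] by auto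
  show ?rhs
  proof (cases "k = i \<and> l = Suc i")
    case True
    then show ?thesis using kl by auto
  next
    case False
    then have "?t k < ?t l" using kl transpose_adj_strict_mono by auto
    then have "precedes x u v" using kl bounds unfolding precedes_def by blast
    moreover have "\<not> (u = x!i \<and> v = x!Suc i)"
    proof
      assume "u = x!i \<and> v = x!Suc i"
      then have "?t k = i" "?t l = Suc i" using kl bounds d i by (auto simp: nth_eq_iff_index_eq)
      then have "k = Suc i" "l = i" by (metis transpose_involutory transpose_apply_first transpose_apply_second)+
      then show False using kl by auto
    qed
    ultimately show ?thesis by auto
  qed
next
  let ?t = "Transposition.transpose i (Suc i)"
  assume ?rhs
  then consider "u = x!Suc i" "v = x!i"
    | K L where "K < L" "L < length x" "x!K = u" "x!L = v" "\<not> (K = i \<and> L = Suc i)"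
    unfolding precedes_def by blast
  then show ?lhs
  proof cases
    case 1
    then show ?thesis using i nth_swap_adj[OF i, of i] nth_swap_adj[OF i, of "Suc i"]
      unfolding precedes_def by (intro exI[of _ i] exI[of _ "Suc i"]) auto
  next
    case 2
    then have "?t K < ?t L" "?t L < length x" "swap_adj x i ! ?t K = u" "swap_adj x i ! ?t L = v"
      using transpose_adj_strict_mono transpose_adj_less[OF i] nth_swap_adj[OF i] by auto
    then show ?thesis unfolding precedes_def by (metis length_swap_adj)
  qed
qed

lemma inv_pairs_swap_adj_desc:
  assumes x: "x \<in> perms n" and i: "Suc i < n" and desc: "x!Suc i < x!i"
  shows "inv_pairs (swap_adj x i) = inv_pairs x - {(x!Suc i, x!i)}"
proof -
  have "(a,b) \<in> inv_pairs (swap_adj x i) \<longleftrightarrow> (a,b) \<in> inv_pairs x - {(x!Suc i, x!i)}" for a b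
  proof -
    have "precedes (swap_adj x i) b a \<longleftrightarrow>
        (precedes x b a \<and> \<not> (b = x!i \<and> a = x!Suc i)) \<or> (b = x!Suc i \<and> a = x!i)"
      using precedes_swap_adj[OF distinct_perm[OF x]] length_perm[OF x] i by blast
    then show ?thesis
      unfolding inv_pairs_precedes mem_Collect_eq case_prod_conv Diff_iff singleton_iff prod.inject
      using desc by (metis less_asym)
  qed
  then show ?thesis by auto
qed

lemma inv_pairs_swap_adj_asc:
  assumes x: "x \<in> perms n" and i: "Suc i < n" and asc: "x!i < x!Suc i"
  shows "inv_pairs (swap_adj x i) = inv_pairs x \<union> {(x!i, x!Suc i)}"
proof -
  have prec: "precedes x (x!i) (x!Suc i)" using length_perm[OF x] i unfolding precedes_def by auto
  have "(a,b) \<in> inv_pairs (swap_adj x i) \<longleftrightarrow> (a,b) \<in> inv_pairs x \<union> {(x!i, x!Suc i)}" for a b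
  proof -
    have "precedes (swap_adj x i) b a \<longleftrightarrow>
        (precedes x b a \<and> \<not> (b = x!i \<and> a = x!Suc i)) \<or> (b = x!Suc i \<and> a = x!i)"
      using precedes_swap_adj[OF distinct_perm[OF x]] length_perm[OF x] i by blast
    then show ?thesis
      unfolding inv_pairs_precedes mem_Collect_eq case_prod_conv Un_iff singleton_iff prod.inject
      using asc prec by (metis less_asym)
  qed
  then show ?thesis by auto
qed

section \<open>Twisted Baxter permutations as bottoms of the classes\<close>

text \<open>\<open>x\<close> has an occurrence of 2413 or 3412 at positions \<open>k < i < Suc i < l\<close>, with the
  ``4'' and ``1'' adjacent.\<close>

definition twisted_at :: "nat list \<Rightarrow> nat \<Rightarrow> nat \<Rightarrow> nat \<Rightarrow> bool" where
  "twisted_at x k i l \<longleftrightarrow> k < i \<and> Suc i < l \<and> l < length x \<and>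
     x!Suc i < x!k \<and> x!k < x!i \<and> x!Suc i < x!l \<and> x!l < x!i"

lemma all_less_four: "(\<forall>p < Suc (Suc (Suc (Suc 0))). P p) \<longleftrightarrow> P 0 \<and> P 1 \<and> P 2 \<and> P 3"
  by (auto simp: less_Suc_eq numeral_eq_Suc)

lemma twisted_baxter_iff: "distinct x \<Longrightarrow> twisted_baxter x \<longleftrightarrow> (\<nexists>k i l. twisted_at x k i l)"
proof
  assume "distinct x" "twisted_baxter x"
  show "\<nexists>k i l. twisted_at x k i l"
  proof clarify
    fix k i l assume tw: "twisted_at x k i l"
    then have "x!k \<noteq> x!l" using \<open>distinct x\<close> unfolding twisted_at_def by (simp add: nth_eq_iff_index_eq)
    then consider "x!k < x!l" | "x!l < x!k" by linarith
    then show False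
    proof cases
      case 1
      then have "occurs_at x [2,4,1,3] [k,i,Suc i,l]"
        using tw unfolding occurs_at_def twisted_at_def by (simp add: all_less_four)
      then show False using \<open>twisted_baxter x\<close> unfolding twisted_baxter_def by fastforce
    next
      case 2
      then have "occurs_at x [3,4,1,2] [k,i,Suc i,l]"
        using tw unfolding occurs_at_def twisted_at_def by (simp add: all_less_four)
      then show False using \<open>twisted_baxter x\<close> unfolding twisted_baxter_def by fastforce
    qed
  qed
next
  assume none: "\<nexists>k i l. twisted_at x k i l"
  have False if pat: "y = [2,4,1,3] \<or> y = [3,4,1,2]" and occ: "occurs_at x y ix"
    and adj: "ix!2 = Suc (ix!1)" for y ix
  proof -
    have "ix!0 < ix!1" "ix!2 < ix!3" "ix!3 < length x"
      using occ pat unfolding occurs_at_def by (auto intro: sorted_wrt_nth_less)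
    moreover have ord: "x!(ix!p) < x!(ix!q) \<longleftrightarrow> y!p < y!q" if "p < 4" "q < 4" for p q
      using occ pat that unfolding occurs_at_def by auto
    have "y!2 < y!0" "y!0 < y!1" "y!2 < y!3" "y!3 < y!1" using pat by auto
    then have "x!(ix!2) < x!(ix!0)" "x!(ix!0) < x!(ix!1)" "x!(ix!2) < x!(ix!3)" "x!(ix!3) < x!(ix!1)"
      using ord by auto
    ultimately have "twisted_at x (ix!0) (ix!1) (ix!3)"
      using adj unfolding twisted_at_def by auto
    then show False using none by blast
  qed
  then show "twisted_baxter x" unfolding twisted_baxter_def by blast
qed

definition tb_step :: "nat \<Rightarrow> nat list \<Rightarrow> nat list \<Rightarrow> bool" where
  "tb_step n x y \<longleftrightarrow> x \<in> perms n \<and> (\<exists>k i l. twisted_at x k i l \<and> y = swap_adj x i)"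

lemma low_fan_Diff_singleton:
  assumes "(a,d) \<notin> A" "a < d" "d < b"
  shows "low_fan (A - {(a,b)}) = low_fan A"
  using assms unfolding low_fan_def by fastforce

lemma high_fan_Diff_singleton:
  assumes "(c,b) \<notin> A" "a < c" "c < b"
  shows "high_fan (A - {(a,b)}) = high_fan A"
  using assms unfolding high_fan_def by fastforce

lemma tb_step_props:
  assumes "tb_step n x y"
  shows "y \<in> perms n" "(x,y) \<in> tb_cong n" "card (inv_pairs y) < card (inv_pairs x)"
proof -
  obtain k i l where x: "x \<in> perms n" and tw: "twisted_at x k i l" and y: "y = swap_adj x i"
    using assms unfolding tb_step_def by auto
  have len: "length x = n" using length_perm[OF x] .
  let ?a = "x!Suc i" and ?b = "x!i"
  have inv: "inv_pairs y = inv_pairs x - {(?a, ?b)}"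
    using inv_pairs_swap_adj_desc[OF x] tw y len unfolding twisted_at_def by auto
  have "precedes x (x!k) ?b" "precedes x ?a (x!l)"
    using tw unfolding twisted_at_def precedes_def by force+
  then have "(x!k, ?b) \<notin> inv_pairs x" "(?a, x!l) \<notin> inv_pairs x"
    using precedes_asym[OF distinct_perm[OF x]] unfolding inv_pairs_precedes by auto
  then have "low_fan (inv_pairs y) = low_fan (inv_pairs x)"
    "high_fan (inv_pairs y) = high_fan (inv_pairs x)"
    using inv low_fan_Diff_singleton high_fan_Diff_singleton tw unfolding twisted_at_def by auto
  moreover show y_perm: "y \<in> perms n" using perm_swap_adj[OF x] tw y len unfolding twisted_at_def by auto
  ultimately show "(x,y) \<in> tb_cong n" using x unfolding tb_cong_def by auto
  have "(?a, ?b) \<in> inv_pairs x" using tw unfolding twisted_at_def inv_pairs_def by force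
  moreover have "inv_pairs x \<subseteq> {..n} \<times> {..n}"
    using inv_pairs_subset_value_pairs[OF x] unfolding value_pairs_def by auto
  then have "finite (inv_pairs x)" by (rule finite_subset) auto
  ultimately show "card (inv_pairs y) < card (inv_pairs x)" using inv by (metis card_Diff1_less)
qed

lemma exists_tb_step:
  assumes "x \<in> perms n" "\<not> twisted_baxter x"
  obtains y where "tb_step n x y"
  using assms twisted_baxter_iff[OF distinct_perm[OF assms(1)]] unfolding tb_step_def by blast

lemma tb_steps_to_twisted_baxter:
  "x \<in> perms n \<Longrightarrow> \<exists>t. twisted_baxter t \<and> (tb_step n)\<^sup>*\<^sup>* x t"
proof (induction "card (inv_pairs x)" arbitrary: x rule: less_induct)
  case less
  show ?case
  proof (cases "twisted_baxter x")
    case False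
    then obtain y where y: "tb_step n x y" using exists_tb_step less.prems by blast
    then obtain t where "twisted_baxter t" "(tb_step n)\<^sup>*\<^sup>* y t"
      using less.hyps tb_step_props by blast
    then show ?thesis using y by (meson converse_rtranclp_into_rtranclp)
  qed auto
qed

lemma tb_steps_tb_cong: "(tb_step n)\<^sup>*\<^sup>* x t \<Longrightarrow> x \<in> perms n \<Longrightarrow> (x,t) \<in> tb_cong n"
proof (induction rule: rtranclp_induct)
  case base
  then show ?case unfolding tb_cong_def by auto
next
  case (step y z)
  then show ?case using tb_step_props(2) tb_cong_trans by blast
qed

lemma nat_crossing:
  assumes "i \<le> j" "\<not> P i" "P j"
  obtains m where "i \<le> m" "m < j" "\<not> P m" "P (Suc m)"
  using assms
proof (induction j)
  case (Suc j)
  then show ?case by (cases "P j") (auto simp: le_Suc_eq)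
qed auto

lemma inv_pair_in_high_fan:
  assumes x: "x \<in> perms n" and ij: "i < j" "j < n" "x!j < x!i"
    and gap: "\<forall>m<j. \<not> (x!j < x!m \<and> x!m < x!i)"
  shows "(x!j, x!i) \<in> high_fan (inv_pairs x)"
proof -
  have "(c, x!i) \<in> inv_pairs x" if "x!j \<le> c" "c < x!i" for c
  proof -
    have "x!i \<in> {1..n}" using x ij by (metis length_perm nth_mem order.strict_trans set_perm)
    then have "c \<in> set x" using x \<open>c < x!i\<close> \<open>x!j \<le> c\<close> ij
      by (metis atLeastAtMost_iff le_trans length_perm less_imp_le_nat nth_mem set_perm)
    then obtain m where m: "m < n" "x!m = c" using length_perm[OF x] by (metis in_set_conv_nth)
    have "j \<le> m"
    proof (rule ccontr)
      assume "\<not> j \<le> m"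
      then have "\<not> (x!j < x!m \<and> x!m < x!i)" using gap by simp
      then have "c = x!j" using m that by simp
      then show False using m \<open>\<not> j \<le> m\<close> ij distinct_perm[OF x] length_perm[OF x]
        by (simp add: nth_eq_iff_index_eq)
    qed
    then have "precedes x (x!i) c"
      unfolding precedes_def using ij m length_perm[OF x] by (intro exI[of _ i] exI[of _ m]) auto
    then show ?thesis using that unfolding inv_pairs_precedes by auto
  qed
  then show ?thesis using ij unfolding high_fan_def by auto
qed

lemma inv_pair_in_low_fan:
  assumes x: "x \<in> perms n" and ij: "i < j" "j < n" "x!j < x!i"
    and gap: "\<forall>m. i < m \<longrightarrow> m < n \<longrightarrow> \<not> (x!j < x!m \<and> x!m < x!i)"
  shows "(x!j, x!i) \<in> low_fan (inv_pairs x)"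
proof -
  have "(x!j, c) \<in> inv_pairs x" if "x!j < c" "c \<le> x!i" for c
  proof -
    have "x!j \<in> {1..n}" using x ij by (metis length_perm nth_mem set_perm)
    then have "c \<in> set x" using x \<open>x!j < c\<close> \<open>c \<le> x!i\<close> ij
      by (metis atLeastAtMost_iff le_trans length_perm less_imp_le_nat nth_mem order.strict_trans set_perm)
    then obtain m where m: "m < n" "x!m = c" using length_perm[OF x] by (metis in_set_conv_nth)
    have "m \<le> i"
    proof (rule ccontr)
      assume "\<not> m \<le> i"
      then have "\<not> (x!j < x!m \<and> x!m < x!i)" using gap m(1) by (simp add: not_le)
      then have "c = x!i" using m that by simp
      then show False using m \<open>\<not> m \<le> i\<close> ij distinct_perm[OF x] length_perm[OF x]
        by (simp add: nth_eq_iff_index_eq)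
    qed
    then have "precedes x c (x!j)"
      unfolding precedes_def using ij m length_perm[OF x] by (intro exI[of _ m] exI[of _ j]) auto
    then show ?thesis using that unfolding inv_pairs_precedes by auto
  qed
  then show ?thesis using ij unfolding low_fan_def by auto
qed

text \<open>If no value between \<open>x!j\<close> and \<open>x!i\<close> sits between the positions \<open>i\<close> and \<open>j\<close>, but such values
  occur both to the left and to the right, then going from \<open>i\<close> to \<open>j\<close> some adjacent descent
  crosses the gap, and together with the two outer values it forms a forbidden pattern.\<close>

lemma twisted_baxter_inv_pair_in_fan:
  assumes x: "x \<in> perms n" and tb: "twisted_baxter x" and ij: "i < j" "j < n" "x!j < x!i"
    and gap: "\<forall>m. i < m \<longrightarrow> m < j \<longrightarrow> \<not> (x!j < x!m \<and> x!m < x!i)"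
  shows "(x!j, x!i) \<in> low_fan (inv_pairs x) \<union> high_fan (inv_pairs x)"
proof (rule ccontr)
  let ?a = "x!j" and ?b = "x!i"
  assume "(?a, ?b) \<notin> low_fan (inv_pairs x) \<union> high_fan (inv_pairs x)"
  then obtain k l where k: "k < j" "?a < x!k" "x!k < ?b" and l: "i < l" "l < n" "?a < x!l" "x!l < ?b"
    using inv_pair_in_low_fan[OF x ij] inv_pair_in_high_fan[OF x ij] by blast
  have "k < i" "j < l" using k l gap ij by (metis less_irrefl not_less_iff_gr_or_eq)+
  obtain m where m: "i \<le> m" "m < j" "\<not> x!m \<le> ?a" "x!Suc m \<le> ?a"
    using nat_crossing[of i j "\<lambda>m. x!m \<le> ?a"] ij by auto
  have "?b \<le> x!m"
  proof (cases "m = i")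
    case False
    then have "\<not> (?a < x!m \<and> x!m < ?b)" using gap m(1,2) by simp
    then show ?thesis using m(3) by (simp add: not_le)
  qed simp
  then have "twisted_at x k m l"
    using k l m \<open>k < i\<close> \<open>j < l\<close> length_perm[OF x] unfolding twisted_at_def by auto
  then show False using tb twisted_baxter_iff distinct_perm[OF x] by blast
qed

lemma twisted_baxter_inv_pairs_generated_by_fans:
  assumes x: "x \<in> perms n" and tb: "twisted_baxter x"
  shows "inv_pairs x \<subseteq> (low_fan (inv_pairs x) \<union> high_fan (inv_pairs x))\<^sup>+"
proof -
  let ?T = "(low_fan (inv_pairs x) \<union> high_fan (inv_pairs x))\<^sup>+"
  have "(x!j, x!i) \<in> ?T" if "i < j" "j < n" "x!j < x!i" for i j
    using that
  proof (induction "j - i" arbitrary: i j rule: less_induct)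
    case less
    show ?case
    proof (cases "\<exists>m. i < m \<and> m < j \<and> x!j < x!m \<and> x!m < x!i")
      case True
      then obtain m where m: "i < m" "m < j" "x!j < x!m" "x!m < x!i" by blast
      then have "(x!j, x!m) \<in> ?T" "(x!m, x!i) \<in> ?T" using less by auto
      then show ?thesis by (rule trancl_trans)
    next
      case False
      then show ?thesis using twisted_baxter_inv_pair_in_fan[OF x tb less.prems] by blast
    qed
  qed
  then show ?thesis
    using length_perm[OF x] unfolding inv_pairs_def by blast
qed

lemma twisted_baxter_weak_le_if_fans_subset:
  assumes x: "x \<in> perms n" and y: "y \<in> perms n" and tb: "twisted_baxter x"
    and low: "low_fan (inv_pairs x) \<subseteq> low_fan (inv_pairs y)"
    and high: "high_fan (inv_pairs x) \<subseteq> high_fan (inv_pairs y)"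
  shows "weak_le x y"
proof -
  have "inv_pairs x \<subseteq> (low_fan (inv_pairs x) \<union> high_fan (inv_pairs x))\<^sup>+"
    by (rule twisted_baxter_inv_pairs_generated_by_fans[OF x tb])
  also have "\<dots> \<subseteq> (inv_pairs y)\<^sup>+"
    using low high low_fan_subset high_fan_subset by (intro trancl_mono_subset) blast
  also have "\<dots> = inv_pairs y" using trans_inv_pairs[OF distinct_perm[OF y]] by (rule trancl_id)
  finally show ?thesis unfolding weak_le_def .
qed

lemma twisted_baxter_tb_cong_unique:
  assumes "twisted_baxter x" "twisted_baxter y" "(x,y) \<in> tb_cong n"
  shows "x = y"
proof -
  have x: "x \<in> perms n" and y: "y \<in> perms n" using assms(3) tb_cong_perms by auto
  have "weak_le x y" "weak_le y x"
    using twisted_baxter_weak_le_if_fans_subset[OF x y assms(1)]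
      twisted_baxter_weak_le_if_fans_subset[OF y x assms(2)] assms(3)
    unfolding tb_cong_def by auto
  then show ?thesis using weak_le_antisym[OF x y] by blast
qed

section \<open>Standardization\<close>

definition rank_in :: "nat set \<Rightarrow> nat \<Rightarrow> nat" where
  "rank_in S a = card {c \<in> S. c \<le> a}"

lemma st_conv_map_rank_in: "st w = map (rank_in (set w)) w"
  unfolding st_def rank_in_def by simp

lemma rank_in_mono: "finite S \<Longrightarrow> a \<le> b \<Longrightarrow> rank_in S a \<le> rank_in S b"
  unfolding rank_in_def by (intro card_mono) auto

lemma rank_in_strict_mono:
  assumes "finite S" "b \<in> S" "a < b"
  shows "rank_in S a < rank_in S b"
proof -
  have "b \<in> {c \<in> S. c \<le> b}" "b \<notin> {c \<in> S. c \<le> a}" using assms by auto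
  moreover have "{c \<in> S. c \<le> a} \<subseteq> {c \<in> S. c \<le> b}" using assms by auto
  ultimately have "{c \<in> S. c \<le> a} \<subset> {c \<in> S. c \<le> b}" by blast
  then show ?thesis unfolding rank_in_def using assms(1) by (intro psubset_card_mono) auto
qed

lemma rank_in_less_iff:
  "finite S \<Longrightarrow> a \<in> S \<Longrightarrow> b \<in> S \<Longrightarrow> rank_in S a < rank_in S b \<longleftrightarrow> a < b"
  using rank_in_strict_mono rank_in_mono by (meson leD not_less)

lemma inj_on_rank_in: "finite S \<Longrightarrow> inj_on (rank_in S) S"
  unfolding inj_on_def by (metis rank_in_less_iff linorder_neqE_nat less_irrefl)

lemma bij_betw_rank_in:
  assumes "finite S"
  shows "bij_betw (rank_in S) S {1..card S}"
proof -
  have "rank_in S a \<in> {1..card S}" if "a \<in> S" for a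
  proof -
    have "a \<in> {c \<in> S. c \<le> a}" using that by auto
    then have "0 < rank_in S a" unfolding rank_in_def using assms by (auto simp: card_gt_0_iff)
    moreover have "rank_in S a \<le> card S" unfolding rank_in_def using assms by (intro card_mono) auto
    ultimately show ?thesis by auto
  qed
  then have "rank_in S ` S \<subseteq> {1..card S}" by auto
  moreover have "card (rank_in S ` S) = card {1..card S}"
    using card_image[OF inj_on_rank_in[OF assms]] by simp
  ultimately show ?thesis
    using inj_on_rank_in[OF assms] unfolding bij_betw_def by (simp add: card_subset_eq)
qed

lemma length_st [simp]: "length (st w) = length w"
  unfolding st_def by simp

lemma st_perm:
  assumes "distinct w"
  shows "st w \<in> perms (length w)"
proof -
  have "distinct (st w)"
    unfolding st_conv_map_rank_in using assms inj_on_rank_in[of "set w"] by (simp add: distinct_map)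
  moreover have "set (st w) = {1..length w}"
    unfolding st_conv_map_rank_in
    using bij_betw_imp_surj_on[OF bij_betw_rank_in[of "set w"]] distinct_card[OF assms] by simp
  ultimately show ?thesis unfolding perms_def by auto
qed

lemma st_less_iff:
  "i < length w \<Longrightarrow> j < length w \<Longrightarrow> st w ! i < st w ! j \<longleftrightarrow> w!i < w!j"
  unfolding st_conv_map_rank_in by (simp add: rank_in_less_iff)

lemma st_map_strict_mono:
  assumes "\<forall>a\<in>set w. \<forall>b\<in>set w. a < b \<longrightarrow> f a < f b"
  shows "st (map f w) = st w"
proof -
  have inj: "inj_on f (set w)"
    using assms unfolding inj_on_def by (metis linorder_neqE_nat less_irrefl)
  have "rank_in (f ` set w) (f a) = rank_in (set w) a" if "a \<in> set w" for a
  proof -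
    have "f c \<le> f a \<longleftrightarrow> c \<le> a" if "c \<in> set w" for c
      using assms that \<open>a \<in> set w\<close> by (metis leD le_less linorder_le_less_linear)
    then have "{c' \<in> f ` set w. c' \<le> f a} = f ` {c \<in> set w. c \<le> a}" by auto
    then show ?thesis unfolding rank_in_def using card_image[OF inj_on_subset[OF inj]] by auto
  qed
  then show ?thesis unfolding st_conv_map_rank_in by simp
qed

lemma list_eq_if_st_eq:
  assumes "set w1 = set w2" "st w1 = st w2"
  shows "w1 = w2"
proof -
  have "map (rank_in (set w1)) w1 = map (rank_in (set w1)) w2"
    using assms unfolding st_conv_map_rank_in by simp
  moreover have "inj_on (rank_in (set w1)) (set w1 \<union> set w2)"
    using inj_on_rank_in[of "set w1"] assms by simp
  ultimately show ?thesis using inj_on_map_eq_map by blast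
qed

lemma st_perm_id:
  assumes "x \<in> perms n"
  shows "st x = x"
proof -
  have "rank_in {1..n} a = a" if "a \<in> {1..n}" for a
  proof -
    have "{c \<in> {1..n}. c \<le> a} = {1..a}" using that by auto
    then show ?thesis unfolding rank_in_def by simp
  qed
  then show ?thesis unfolding st_conv_map_rank_in set_perm[OF assms]
    by (intro map_idI) (use set_perm[OF assms] in auto)
qed

lemma st_swap_adj: "Suc i < length w \<Longrightarrow> st (swap_adj w i) = swap_adj (st w) i"
  unfolding st_conv_map_rank_in swap_adj_def by (simp add: map_update)

lemma st_take_st: "st (take k (st w)) = st (take k w)"
  unfolding st_conv_map_rank_in[of w] take_map
  by (rule st_map_strict_mono) (meson finite_set in_set_takeD rank_in_strict_mono)

lemma exists_list_with_st:
  assumes "finite S" "u \<in> perms (card S)"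
  obtains w where "distinct w" "set w = S" "st w = u"
proof -
  have bij: "bij_betw (rank_in S) S {1..card S}" using bij_betw_rank_in[OF assms(1)] .
  define g where "g = the_inv_into S (rank_in S)"
  have g: "bij_betw g {1..card S} S" unfolding g_def using bij by (rule bij_betw_the_inv_into)
  have rank_g: "rank_in S (g i) = i" if "i \<in> {1..card S}" for i
    unfolding g_def using bij that by (rule f_the_inv_into_f_bij_betw)
  have u: "set u = {1..card S}" "distinct u" using assms(2) unfolding perms_def by auto
  have "distinct (map g u)" "set (map g u) = S"
    using u g by (auto simp: distinct_map bij_betw_def)
  moreover have "st (map g u) = u"
    unfolding st_conv_map_rank_in \<open>set (map g u) = S\<close> map_map
    by (intro map_idI) (use rank_g u in auto)
  ultimately show thesis using that by blast
qed

section \<open>The insertional property\<close>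

lemma set_drop_perm:
  assumes "x \<in> perms m"
  shows "set (drop p x) = {1..m} - set (take p x)"
proof -
  have "set x = set (take p x) \<union> set (drop p x)" by (metis append_take_drop_id set_append)
  moreover have "set (take p x) \<inter> set (drop p x) = {}"
    using distinct_perm[OF assms] by (metis append_take_drop_id distinct_append)
  ultimately show ?thesis using set_perm[OF assms] by auto
qed

lemma phi_eqI:
  assumes "x \<in> perms (p+q)" "set (take p x) = Q" "st (take p x) = u" "st (drop p x) = v"
  shows "phi p q Q u v = x"
  unfolding phi_def
proof (rule the_equality)
  show "x \<in> perms (p + q) \<and> set (take p x) = Q \<and> st (take p x) = u \<and> st (drop p x) = v"
    using assms by auto
  fix y assume y: "y \<in> perms (p + q) \<and> set (take p y) = Q \<and> st (take p y) = u \<and> st (drop p y) = v"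
  then have "take p y = take p x" using assms list_eq_if_st_eq by simp
  moreover have "set (drop p y) = set (drop p x)"
    using y assms set_drop_perm[of y "p+q" p] set_drop_perm[of x "p+q" p] by simp
  then have "drop p y = drop p x" using y assms list_eq_if_st_eq by simp
  ultimately show "y = x" by (metis append_take_drop_id)
qed

lemma phi_props:
  assumes Q: "Q \<subseteq> {1..p+q}" "card Q = p" and u: "u \<in> perms p" and v: "v \<in> perms q"
  shows "phi p q Q u v \<in> perms (p+q)" "set (take p (phi p q Q u v)) = Q"
    "st (take p (phi p q Q u v)) = u" "st (drop p (phi p q Q u v)) = v"
proof -
  have fin: "finite Q" "finite ({1..p+q} - Q)" using Q(1) finite_subset by auto
  have "card ({1..p+q} - Q) = q" using Q fin by (simp add: card_Diff_subset)
  then obtain w2 where w2: "distinct w2" "set w2 = {1..p+q} - Q" "st w2 = v"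
    using exists_list_with_st[OF fin(2)] v by metis
  obtain w1 where w1: "distinct w1" "set w1 = Q" "st w1 = u"
    using exists_list_with_st[OF fin(1)] u Q(2) by metis
  have "length w1 = p" using w1 Q(2) distinct_card by fastforce
  moreover have "w1 @ w2 \<in> perms (p+q)" using w1 w2 Q unfolding perms_def by auto
  ultimately have "phi p q Q u v = w1 @ w2" using phi_eqI w1 w2 by simp
  then show "phi p q Q u v \<in> perms (p+q)" "set (take p (phi p q Q u v)) = Q"
    "st (take p (phi p q Q u v)) = u" "st (drop p (phi p q Q u v)) = v"
    using \<open>w1 @ w2 \<in> perms (p+q)\<close> \<open>length w1 = p\<close> w1 w2 by auto
qed

lemma take_swap_adj_low: "Suc i < p \<Longrightarrow> take p (swap_adj x i) = swap_adj (take p x) i"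
  unfolding swap_adj_def by (simp add: take_update_swap nth_take)

lemma drop_swap_adj_low: "Suc i < p \<Longrightarrow> drop p (swap_adj x i) = drop p x"
  unfolding swap_adj_def by simp

lemma take_swap_adj_high: "p \<le> i \<Longrightarrow> take p (swap_adj x i) = take p x"
  unfolding swap_adj_def by simp

lemma drop_swap_adj_high:
  assumes "p \<le> i" "Suc i < length x"
  shows "drop p (swap_adj x i) = swap_adj (drop p x) (i - p)"
proof (rule nth_equalityI)
  let ?t = "Transposition.transpose"
  show "length (drop p (swap_adj x i)) = length (swap_adj (drop p x) (i - p))" by simp
  fix k assume k: "k < length (drop p (swap_adj x i))"
  have i': "Suc (i - p) < length (drop p x)" using assms by auto
  have "drop p (swap_adj x i) ! k = x ! ?t i (Suc i) (p + k)"
    using nth_swap_adj[OF assms(2)] k by simp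
  also have "?t i (Suc i) (p + k) = p + ?t (i - p) (Suc (i - p)) k"
    using assms(1) unfolding Transposition.transpose_def by auto
  also have "x ! (p + ?t (i - p) (Suc (i - p)) k) = swap_adj (drop p x) (i - p) ! k"
    using nth_swap_adj[OF i'] transpose_adj_less[OF i'] k by simp
  finally show "drop p (swap_adj x i) ! k = swap_adj (drop p x) (i - p) ! k" .
qed

locale insertion =
  fixes p q :: nat and Q :: "nat set"
  assumes Q_subset: "Q \<subseteq> {1..p+q}" and card_Q: "card Q = p"
begin

abbreviation ins :: "nat list \<Rightarrow> nat list \<Rightarrow> nat list" where
  "ins \<equiv> phi p q Q"

lemmas ins_props = phi_props[OF Q_subset card_Q]

lemma length_ins: "u \<in> perms p \<Longrightarrow> v \<in> perms q \<Longrightarrow> length (ins u v) = p + q"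
  using ins_props(1) length_perm by blast

lemma ins_less_iff_left:
  assumes "u \<in> perms p" "v \<in> perms q" "a < p" "b < p"
  shows "ins u v ! a < ins u v ! b \<longleftrightarrow> u!a < u!b"
  using st_less_iff[of a "take p (ins u v)" b] ins_props(3)[OF assms(1,2)] length_ins[OF assms(1,2)] assms(3,4)
  by simp

lemma ins_less_iff_right:
  assumes "u \<in> perms p" "v \<in> perms q" "a < q" "b < q"
  shows "ins u v ! (p+a) < ins u v ! (p+b) \<longleftrightarrow> v!a < v!b"
  using st_less_iff[of a "drop p (ins u v)" b] ins_props(4)[OF assms(1,2)] length_ins[OF assms(1,2)] assms(3,4)
  by simp

lemma ins_swap_adj_left:
  assumes u: "u \<in> perms p" and v: "v \<in> perms q" and i: "Suc i < p"
  shows "ins (swap_adj u i) v = swap_adj (ins u v) i"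
proof (rule phi_eqI)
  note P = ins_props[OF u v]
  have lt: "Suc i < length (take p (ins u v))" using length_ins[OF u v] i by simp
  show "swap_adj (ins u v) i \<in> perms (p + q)" using perm_swap_adj[OF P(1)] i by simp
  show "set (take p (swap_adj (ins u v) i)) = Q" using take_swap_adj_low[OF i] set_swap_adj[OF lt] P(2) by simp
  show "st (take p (swap_adj (ins u v) i)) = swap_adj u i"
    using take_swap_adj_low[OF i] st_swap_adj[OF lt] P(3) by simp
  show "st (drop p (swap_adj (ins u v) i)) = v" using drop_swap_adj_low[OF i] P(4) by simp
qed

lemma ins_swap_adj_right:
  assumes u: "u \<in> perms p" and v: "v \<in> perms q" and i: "Suc i < q"
  shows "ins u (swap_adj v i) = swap_adj (ins u v) (p + i)"
proof (rule phi_eqI)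
  note P = ins_props[OF u v]
  have lt: "Suc i < length (drop p (ins u v))" using length_ins[OF u v] i by simp
  show "swap_adj (ins u v) (p + i) \<in> perms (p + q)" using perm_swap_adj[OF P(1)] i by simp
  show "set (take p (swap_adj (ins u v) (p + i))) = Q" using take_swap_adj_high[of p "p + i"] P(2) by simp
  show "st (take p (swap_adj (ins u v) (p + i))) = u" using take_swap_adj_high[of p "p + i"] P(3) by simp
  show "st (drop p (swap_adj (ins u v) (p + i))) = swap_adj v i"
    using drop_swap_adj_high[of p "p + i"] st_swap_adj[OF lt] P(4) length_ins[OF u v] i by simp
qed

lemma tb_step_ins_left:
  assumes u: "u \<in> perms p" and v: "v \<in> perms q" and step: "tb_step p u u'"
  shows "tb_step (p+q) (ins u v) (ins u' v)"
proof -
  obtain k i l where tw: "twisted_at u k i l" and u': "u' = swap_adj u i"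
    using step unfolding tb_step_def by auto
  have "l < p" using tw length_perm[OF u] unfolding twisted_at_def by simp
  then have "twisted_at (ins u v) k i l"
    using tw ins_less_iff_left[OF u v] length_ins[OF u v] unfolding twisted_at_def by auto
  moreover have "ins u' v = swap_adj (ins u v) i"
    using ins_swap_adj_left[OF u v] u' tw \<open>l < p\<close> unfolding twisted_at_def by auto
  ultimately show ?thesis using ins_props(1)[OF u v] unfolding tb_step_def by blast
qed

lemma tb_step_ins_right:
  assumes u: "u \<in> perms p" and v: "v \<in> perms q" and step: "tb_step q v v'"
  shows "tb_step (p+q) (ins u v) (ins u v')"
proof -
  obtain k i l where tw: "twisted_at v k i l" and v': "v' = swap_adj v i"
    using step unfolding tb_step_def by auto
  have "l < q" using tw length_perm[OF v] unfolding twisted_at_def by simp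
  then have "twisted_at (ins u v) (p+k) (p+i) (p+l)"
    using tw ins_less_iff_right[OF u v] length_ins[OF u v] unfolding twisted_at_def
    by (auto simp flip: add_Suc_right)
  moreover have "ins u v' = swap_adj (ins u v) (p+i)"
    using ins_swap_adj_right[OF u v] v' tw \<open>l < q\<close> unfolding twisted_at_def by auto
  ultimately show ?thesis using ins_props(1)[OF u v] unfolding tb_step_def by blast
qed

lemma tb_steps_ins_left:
  assumes "(tb_step p)\<^sup>*\<^sup>* u t" "u \<in> perms p" "v \<in> perms q"
  shows "(ins u v, ins t v) \<in> tb_cong (p+q)"
  using assms(1)
proof (induction rule: rtranclp_induct)
  case base
  then show ?case using ins_props(1)[OF assms(2,3)] unfolding tb_cong_def by auto
next
  case (step y z)
  have "y \<in> perms p" using tb_steps_tb_cong[OF step.hyps(1) assms(2)] tb_cong_perms by blast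
  then show ?case
    using step tb_step_props(2)[OF tb_step_ins_left] assms(3) tb_cong_trans by blast
qed

lemma tb_steps_ins_right:
  assumes "(tb_step q)\<^sup>*\<^sup>* v t" "u \<in> perms p" "v \<in> perms q"
  shows "(ins u v, ins u t) \<in> tb_cong (p+q)"
  using assms(1)
proof (induction rule: rtranclp_induct)
  case base
  then show ?case using ins_props(1)[OF assms(2,3)] unfolding tb_cong_def by auto
next
  case (step y z)
  have "y \<in> perms q" using tb_steps_tb_cong[OF step.hyps(1) assms(3)] tb_cong_perms by blast
  then show ?case
    using step tb_step_props(2)[OF tb_step_ins_right] assms(2) tb_cong_trans by blast
qed

end

lemma common_tb_reduct:
  assumes "(u,u') \<in> tb_cong n"
  obtains t where "(tb_step n)\<^sup>*\<^sup>* u t" "(tb_step n)\<^sup>*\<^sup>* u' t"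
proof -
  have u: "u \<in> perms n" and u': "u' \<in> perms n" using assms tb_cong_perms by auto
  obtain t where t: "twisted_baxter t" "(tb_step n)\<^sup>*\<^sup>* u t"
    using tb_steps_to_twisted_baxter[OF u] by blast
  obtain t' where t': "twisted_baxter t'" "(tb_step n)\<^sup>*\<^sup>* u' t'"
    using tb_steps_to_twisted_baxter[OF u'] by blast
  have "(t,t') \<in> tb_cong n"
    using tb_steps_tb_cong[OF t(2) u] tb_steps_tb_cong[OF t'(2) u'] assms tb_cong_sym tb_cong_trans
    by meson
  then have "t = t'" using twisted_baxter_tb_cong_unique t t' by blast
  then show thesis using that t t' by blast
qed

lemma insertional_tb_cong: "insertional tb_cong"
  unfolding insertional_def
proof (intro allI impI, elim conjE)
  fix p q Q u u' v v'
  assume Q: "Q \<subseteq> {1..p + q}" "card Q = p" and uu: "(u,u') \<in> tb_cong p" and vv: "(v,v') \<in> tb_cong q"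
  interpret insertion p q Q using Q by unfold_locales
  have u: "u \<in> perms p" "u' \<in> perms p" and v: "v \<in> perms q" "v' \<in> perms q"
    using uu vv tb_cong_perms by auto
  obtain t where t: "(tb_step p)\<^sup>*\<^sup>* u t" "(tb_step p)\<^sup>*\<^sup>* u' t" using common_tb_reduct[OF uu] .
  obtain s where s: "(tb_step q)\<^sup>*\<^sup>* v s" "(tb_step q)\<^sup>*\<^sup>* v' s" using common_tb_reduct[OF vv] .
  have "(ins u v, ins t v) \<in> tb_cong (p+q)" "(ins u' v, ins t v) \<in> tb_cong (p+q)"
    "(ins u' v, ins u' s) \<in> tb_cong (p+q)" "(ins u' v', ins u' s) \<in> tb_cong (p+q)"
    using tb_steps_ins_left[OF t(1) u(1) v(1)] tb_steps_ins_left[OF t(2) u(2) v(1)]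
      tb_steps_ins_right[OF s(1) u(2) v(1)] tb_steps_ins_right[OF s(2) u(2) v(2)] .
  then show "(ins u v, ins u' v') \<in> tb_cong (p+q)" by (meson tb_cong_sym tb_cong_trans)
qed

section \<open>The translational property\<close>

lemma cross_perm:
  assumes u: "u \<in> perms p" and v: "v \<in> perms q"
  shows "cross u v \<in> perms (p+q)"
proof -
  have "set (map (\<lambda>i. p + i) v) = {p+1..p+q}"
    using set_perm[OF v] by (auto simp: image_iff intro!: bexI[of _ "_ - p"])
  then show ?thesis
    using length_perm[OF u] set_perm[OF u] distinct_perm[OF u] distinct_perm[OF v]
    unfolding cross_def perms_def by (auto simp: distinct_map inj_on_def)
qed

lemma cross_eq_phi:
  assumes u: "u \<in> perms p" and v: "v \<in> perms q"
  shows "cross u v = phi p q {1..p} u v"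
proof (rule phi_eqI[symmetric])
  have lu: "length u = p" using length_perm[OF u] .
  show "cross u v \<in> perms (p+q)" by (rule cross_perm[OF u v])
  show "set (take p (cross u v)) = {1..p}" "st (take p (cross u v)) = u"
    unfolding cross_def using lu set_perm[OF u] st_perm_id[OF u] by simp_all
  have "st (map (\<lambda>i. p + i) v) = st v" by (rule st_map_strict_mono) auto
  then show "st (drop p (cross u v)) = v" unfolding cross_def using lu st_perm_id[OF v] by simp
qed

lemma tb_cong_cross:
  assumes "(u,u') \<in> tb_cong p" "(v,v') \<in> tb_cong q"
  shows "(cross u v, cross u' v') \<in> tb_cong (p+q)"
proof -
  have "{1..p} \<subseteq> {1..p+q}" "card {1..p} = p" by auto
  then have "(phi p q {1..p} u v, phi p q {1..p} u' v') \<in> tb_cong (p+q)"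
    using insertional_tb_cong assms unfolding insertional_def by blast
  moreover have "u \<in> perms p" "u' \<in> perms p" "v \<in> perms q" "v' \<in> perms q"
    using tb_cong_perms assms by auto
  ultimately show ?thesis using cross_eq_phi by metis
qed

lemma twisted_at_cross:
  assumes u: "u \<in> perms p" and v: "v \<in> perms q" and tw: "twisted_at (cross u v) k i l"
  shows "twisted_at u k i l \<or> twisted_at v (k-p) (i-p) (l-p)"
proof -
  let ?x = "cross u v"
  have lu: "length u = p" and lv: "length v = q" using length_perm u v by auto
  have nth: "?x ! j = (if j < p then u!j else p + v!(j - p))" if "j < p + q" for j
    using that lu lv unfolding cross_def by (auto simp: nth_append)
  have low: "?x ! j \<le> p" if "j < p" for j
    using nth[of j] that nth_mem[of j u] set_perm[OF u] lu by auto
  have high: "p < ?x ! j" if "p \<le> j" "j < p + q" for j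
    using nth[of j] that nth_mem[of "j - p" v] set_perm[OF v] lv by fastforce
  have l: "l < p + q" using tw lu lv unfolding twisted_at_def cross_def by simp
  consider "l < p" | "p \<le> k" | "k < p" "p \<le> l" by linarith
  then show ?thesis
  proof cases
    case 1
    then show ?thesis using tw nth lu l unfolding twisted_at_def by auto
  next
    case 2
    have "k - p < i - p" "Suc (i - p) < l - p" "l - p < length v"
      using tw 2 l lv unfolding twisted_at_def by auto
    moreover have "v!Suc (i-p) < v!(k-p)" "v!(k-p) < v!(i-p)" "v!Suc (i-p) < v!(l-p)" "v!(l-p) < v!(i-p)"
      using tw nth l lv 2 unfolding twisted_at_def by (auto simp: Suc_diff_le)
    ultimately have "twisted_at v (k-p) (i-p) (l-p)" unfolding twisted_at_def by blast
    then show ?thesis ..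
  next
    case 3
    have False
    proof (cases "Suc i < p")
      case True
      then show False using tw low[of i] high[OF 3(2) l] unfolding twisted_at_def by auto
    next
      case False
      then show False using tw low[OF 3(1)] high[of "Suc i"] l unfolding twisted_at_def by auto
    qed
    then show ?thesis ..
  qed
qed

lemma twisted_baxter_cross:
  assumes "u \<in> perms p" "v \<in> perms q" "twisted_baxter u" "twisted_baxter v"
  shows "twisted_baxter (cross u v)"
proof -
  have "\<nexists>k i l. twisted_at (cross u v) k i l"
    using twisted_at_cross[OF assms(1,2)] assms(3,4)
      twisted_baxter_iff[OF distinct_perm[OF assms(1)]] twisted_baxter_iff[OF distinct_perm[OF assms(2)]]
    by blast
  then show ?thesis using twisted_baxter_iff[OF distinct_perm[OF cross_perm[OF assms(1,2)]]] by blast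
qed

lemma cross_inj:
  assumes "length u = length u'" "cross u v = cross u' v'"
  shows "u = u'" "v = v'"
proof -
  show "u = u'" using assms unfolding cross_def by (metis append_eq_append_conv)
  then have "map (\<lambda>i. length u + i) v = map (\<lambda>i. length u + i) v'"
    using assms unfolding cross_def by simp
  then show "v = v'" by (simp add: inj_map_eq_map inj_def)
qed

lemma translational_tb_cong: "translational tb_cong"
  unfolding translational_def
proof (intro allI impI iffI)
  fix p q u u' v v'
  assume perms: "u \<in> perms p \<and> u' \<in> perms p \<and> v \<in> perms q \<and> v' \<in> perms q"
  show "(u,u') \<in> tb_cong p \<and> (v,v') \<in> tb_cong q \<Longrightarrow> (cross u v, cross u' v') \<in> tb_cong (p+q)"
    using tb_cong_cross by blast
  assume cr: "(cross u v, cross u' v') \<in> tb_cong (p+q)"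
  have bottom: "\<exists>t. twisted_baxter t \<and> (w,t) \<in> tb_cong m" if "w \<in> perms m" for w m
    using tb_steps_to_twisted_baxter[OF that] tb_steps_tb_cong that by blast
  obtain s s' t t' where
    s: "twisted_baxter s" "(u,s) \<in> tb_cong p" and s': "twisted_baxter s'" "(u',s') \<in> tb_cong p" and
    t: "twisted_baxter t" "(v,t) \<in> tb_cong q" and t': "twisted_baxter t'" "(v',t') \<in> tb_cong q"
    using bottom perms by meson
  have "(cross s t, cross s' t') \<in> tb_cong (p+q)"
    using tb_cong_cross[OF s(2) t(2)] tb_cong_cross[OF s'(2) t'(2)] cr tb_cong_sym tb_cong_trans
    by meson
  moreover have "twisted_baxter (cross s t)" "twisted_baxter (cross s' t')"
    using twisted_baxter_cross s t s' t' tb_cong_perms by meson+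
  ultimately have "cross s t = cross s' t'" using twisted_baxter_tb_cong_unique by blast
  moreover have "length s = length s'" using s(2) s'(2) tb_cong_perms length_perm by metis
  ultimately have "s = s'" "t = t'" using cross_inj by blast+
  then show "(u,u') \<in> tb_cong p \<and> (v,v') \<in> tb_cong q"
    using s s' t t' tb_cong_sym tb_cong_trans by meson
qed

lemma H_family_tb_cong: "H_family tb_cong"
  unfolding H_family_def
  using lattice_congruence_tb_cong translational_tb_cong insertional_tb_cong by blast

section \<open>Contracting 3412 and 2413\<close>

lemma precedes_Cons: "precedes (h # t) u v \<longleftrightarrow> (u = h \<and> v \<in> set t) \<or> precedes t u v"
proof
  assume "precedes (h # t) u v"
  then obtain i j where ij: "i < j" "j < Suc (length t)" "(h # t) ! i = u" "(h # t) ! j = v"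
    unfolding precedes_def by auto
  then obtain j' where j: "j = Suc j'" by (cases j) auto
  show "(u = h \<and> v \<in> set t) \<or> precedes t u v"
  proof (cases i)
    case 0
    then show ?thesis using ij j by auto
  next
    case (Suc i')
    then show ?thesis using ij j unfolding precedes_def by auto
  qed
next
  assume "(u = h \<and> v \<in> set t) \<or> precedes t u v"
  then show "precedes (h # t) u v"
  proof
    assume "u = h \<and> v \<in> set t"
    then obtain j where "j < length t" "t!j = v" "u = h" by (auto simp: in_set_conv_nth)
    then show ?thesis unfolding precedes_def by (intro exI[of _ 0] exI[of _ "Suc j"]) auto
  next
    assume "precedes t u v"
    then obtain i j where "i < j" "j < length t" "t!i = u" "t!j = v" unfolding precedes_def by auto
    then show ?thesis unfolding precedes_def by (intro exI[of _ "Suc i"] exI[of _ "Suc j"]) auto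
  qed
qed

lemma inv_pairs_Nil: "inv_pairs [] = {}"
  unfolding inv_pairs_def by auto

lemma inv_pairs_Cons: "inv_pairs (h # t) = (\<lambda>a. (a,h)) ` set (filter (\<lambda>a. a < h) t) \<union> inv_pairs t"
  unfolding inv_pairs_precedes precedes_Cons by auto

lemma lower_star_eqI:
  assumes g: "g \<in> perms n" and y: "y \<in> perms n"
    and inv_g: "inv_pairs g = insert e (inv_pairs y)" and e: "e \<notin> inv_pairs y"
    and only: "\<And>z. z \<in> perms n \<Longrightarrow> inv_pairs z \<subseteq> inv_pairs g \<Longrightarrow> e \<in> inv_pairs z \<Longrightarrow> z = g"
  shows "lower_star g = y"
proof -
  have below: "weak_le z y" if "z \<in> perms n" "weak_lt z g" for z
  proof -
    have "e \<notin> inv_pairs z" using only that unfolding weak_lt_def weak_le_def by auto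
    then show ?thesis using that inv_g unfolding weak_lt_def weak_le_def by auto
  qed
  have y_lt: "weak_lt y g" using inv_g e unfolding weak_lt_def weak_le_def by auto
  have covered: "weak_covered n y g"
    unfolding weak_covered_def using g y y_lt below weak_le_antisym[OF _ y]
    unfolding weak_lt_def by blast
  have "z = y" if "weak_covered n z g" for z
  proof (rule ccontr)
    assume "z \<noteq> y"
    then have "weak_lt z y" using below that unfolding weak_covered_def weak_lt_def by blast
    then show False using that y y_lt unfolding weak_covered_def by blast
  qed
  then show ?thesis
    unfolding lower_star_def length_perm[OF g] using covered by blast
qed

lemma perms_3412_2413: "[3,4,1,2] \<in> perms 4" "[3,1,4,2] \<in> perms 4" "[2,4,1,3] \<in> perms 4" "[2,1,4,3] \<in> perms 4"
  unfolding perms_def by auto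

lemma lower_star_3412: "lower_star [3,4,1,2] = [3,1,4,2]"
proof (rule lower_star_eqI[OF perms_3412_2413(1,2), of "(1,4)"])
  have inv: "inv_pairs [3,4,1,2] = {(1,3),(2,3),(1,4),(2,4)}" "inv_pairs [3,1,4,2] = {(1,3),(2,3),(2,4)}"
    by (simp_all add: inv_pairs_Cons inv_pairs_Nil insert_commute)
  then show "inv_pairs [3,4,1,2] = insert (1,4) (inv_pairs [3,1,4,2])" "(1,4) \<notin> inv_pairs [3,1,4,2]"
    by auto
  fix z assume z: "z \<in> perms 4" "inv_pairs z \<subseteq> inv_pairs [3,4,1,2]" "(1,4) \<in> inv_pairs z"
  have ct: "(a,b) \<in> inv_pairs z \<or> (b,c) \<in> inv_pairs z" if "a < b" "b < c" "(a,c) \<in> inv_pairs z" for a b c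
    using cotransitive_inv_pairs[OF z(1)] that unfolding cotransitive_def by blast
  have "(2,4) \<in> inv_pairs z" "(1,3) \<in> inv_pairs z" using ct[of 1 2 4] ct[of 1 3 4] z(2,3) inv by auto
  then have "(2,3) \<in> inv_pairs z" using ct[of 1 2 3] z(2) inv by auto
  then have "inv_pairs z = inv_pairs [3,4,1,2]"
    using \<open>(2,4) \<in> inv_pairs z\<close> \<open>(1,3) \<in> inv_pairs z\<close> z(2,3) inv by auto
  then show "z = [3,4,1,2]" using perm_eq_if_inv_pairs_eq z(1) perms_3412_2413(1) by blast
qed

lemma lower_star_2413: "lower_star [2,4,1,3] = [2,1,4,3]"
proof (rule lower_star_eqI[OF perms_3412_2413(3,4), of "(1,4)"])
  have inv: "inv_pairs [2,4,1,3] = {(1,2),(1,4),(3,4)}" "inv_pairs [2,1,4,3] = {(1,2),(3,4)}"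
    by (simp_all add: inv_pairs_Cons inv_pairs_Nil insert_commute)
  then show "inv_pairs [2,4,1,3] = insert (1,4) (inv_pairs [2,1,4,3])" "(1,4) \<notin> inv_pairs [2,1,4,3]"
    by auto
  fix z assume z: "z \<in> perms 4" "inv_pairs z \<subseteq> inv_pairs [2,4,1,3]" "(1,4) \<in> inv_pairs z"
  have ct: "(a,b) \<in> inv_pairs z \<or> (b,c) \<in> inv_pairs z" if "a < b" "b < c" "(a,c) \<in> inv_pairs z" for a b c
    using cotransitive_inv_pairs[OF z(1)] that unfolding cotransitive_def by blast
  have "(1,2) \<in> inv_pairs z" "(3,4) \<in> inv_pairs z" using ct[of 1 2 4] ct[of 1 3 4] z(2,3) inv by auto
  then have "inv_pairs z = inv_pairs [2,4,1,3]" using z(2,3) inv by auto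
  then show "z = [2,4,1,3]" using perm_eq_if_inv_pairs_eq z(1) perms_3412_2413(3) by blast
qed

lemma contracts_tb_cong: "contracts tb_cong [3,4,1,2]" "contracts tb_cong [2,4,1,3]"
proof -
  have "twisted_at [3,4,1,2] 0 1 3" "swap_adj [3,4,1,2] 1 = [3,1,4,2]"
    "twisted_at [2,4,1,3] 0 1 3" "swap_adj [2,4,1,3] 1 = [2,1,4,3]"
    unfolding twisted_at_def swap_adj_def by simp_all
  then have "tb_step 4 [3,4,1,2] [3,1,4,2]" "tb_step 4 [2,4,1,3] [2,1,4,3]"
    unfolding tb_step_def using perms_3412_2413 by metis+
  then have "([3,4,1,2], [3,1,4,2]) \<in> tb_cong 4" "([2,4,1,3], [2,1,4,3]) \<in> tb_cong 4"
    using tb_step_props(2) by blast+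
  then show "contracts tb_cong [3,4,1,2]" "contracts tb_cong [2,4,1,3]"
    unfolding contracts_def lower_star_3412 lower_star_2413 by (simp_all add: numeral_eq_Suc)
qed

section \<open>Minimality\<close>

lemma swap_adj_swap_adj: "Suc i < length y \<Longrightarrow> swap_adj (swap_adj y i) i = y"
  unfolding swap_adj_def by (simp add: list_update_swap)

lemma swap_adj_commute:
  assumes "Suc a < length y" "Suc b < length y" "Suc a < b \<or> Suc b < a"
  shows "swap_adj (swap_adj y a) b = swap_adj (swap_adj y b) a"
proof (rule nth_equalityI)
  fix m assume "m < length (swap_adj (swap_adj y a) b)"
  then show "swap_adj (swap_adj y a) b ! m = swap_adj (swap_adj y b) a ! m"
    using assms by (simp add: nth_swap_adj transpose_adj_less) (auto simp: Transposition.transpose_def)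
qed simp

lemma st_twisted_four:
  assumes "a < c" "c < b" "a < d" "d < b" "c \<noteq> d"
  shows "st [c,b,a,d] = [2,4,1,3] \<or> st [c,b,a,d] = [3,4,1,2]"
proof (cases "c < d")
  case True
  define f :: "nat \<Rightarrow> nat" where "f s = (if s = 1 then a else if s = 2 then c else if s = 3 then d else b)" for s
  have "[c,b,a,d] = map f [2,4,1,3]" by (simp add: f_def)
  moreover have "st (map f [2,4,1,3]) = st [2,4,1,3]"
    by (rule st_map_strict_mono) (use assms True in \<open>auto simp: f_def\<close>)
  ultimately show ?thesis using st_perm_id[OF perms_3412_2413(3)] by simp
next
  case False
  define f :: "nat \<Rightarrow> nat" where "f s = (if s = 1 then a else if s = 2 then d else if s = 3 then c else b)" for s
  have "[c,b,a,d] = map f [3,4,1,2]" by (simp add: f_def)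
  moreover have "st (map f [3,4,1,2]) = st [3,4,1,2]"
    by (rule st_map_strict_mono) (use assms False in \<open>auto simp: f_def\<close>)
  ultimately show ?thesis using st_perm_id[OF perms_3412_2413(1)] by simp
qed

locale contracting_H_family =
  fixes \<Theta> :: "nat \<Rightarrow> (nat list \<times> nat list) set"
  assumes H_family: "H_family \<Theta>"
    and contracts_3412: "contracts \<Theta> [3,4,1,2]" and contracts_2413: "contracts \<Theta> [2,4,1,3]"
begin

lemma lattice_congruence_family: "lattice_congruence n (\<Theta> n)"
  using H_family unfolding H_family_def by blast

lemma cong_refl: "x \<in> perms n \<Longrightarrow> (x,x) \<in> \<Theta> n"
  using lattice_congruence_family[of n] unfolding lattice_congruence_def equiv_def refl_on_def by blast

lemma cong_sym: "(x,y) \<in> \<Theta> n \<Longrightarrow> (y,x) \<in> \<Theta> n"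
  using lattice_congruence_family[of n] unfolding lattice_congruence_def equiv_def sym_def by blast

lemma cong_trans: "(x,y) \<in> \<Theta> n \<Longrightarrow> (y,z) \<in> \<Theta> n \<Longrightarrow> (x,z) \<in> \<Theta> n"
  using lattice_congruence_family[of n] unfolding lattice_congruence_def equiv_def trans_def by blast

lemma cong_weak_join: "(x,y) \<in> \<Theta> n \<Longrightarrow> z \<in> perms n \<Longrightarrow> (weak_join n x z, weak_join n y z) \<in> \<Theta> n"
  using lattice_congruence_family unfolding lattice_congruence_def by blast

lemma cong_weak_meet: "(x,y) \<in> \<Theta> n \<Longrightarrow> z \<in> perms n \<Longrightarrow> (weak_meet n x z, weak_meet n y z) \<in> \<Theta> n"
  using lattice_congruence_family unfolding lattice_congruence_def by blast

lemma cong_phi: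
  "Q \<subseteq> {1..p+q} \<Longrightarrow> card Q = p \<Longrightarrow> (u,u') \<in> \<Theta> p \<Longrightarrow> (v,v') \<in> \<Theta> q \<Longrightarrow>
    (phi p q Q u v, phi p q Q u' v') \<in> \<Theta> (p+q)"
  using H_family unfolding H_family_def insertional_def by blast

lemma cong_swap_adj_pattern:
  assumes "G = [2,4,1,3] \<or> G = [3,4,1,2]"
  shows "(G, swap_adj G 1) \<in> \<Theta> 4"
proof -
  have "swap_adj [2,4,1,3] 1 = lower_star [2,4,1,3]" "swap_adj [3,4,1,2] 1 = lower_star [3,4,1,2]"
    unfolding lower_star_3412 lower_star_2413 by (simp_all add: swap_adj_def)
  then show ?thesis
    using assms contracts_3412 contracts_2413 unfolding contracts_def by (auto simp: numeral_eq_Suc)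
qed

lemma cong_swap_adj_take:
  assumes x: "x \<in> perms (p+q)" and i: "Suc i < p"
    and cong: "(st (take p x), swap_adj (st (take p x)) i) \<in> \<Theta> p"
  shows "(x, swap_adj x i) \<in> \<Theta> (p+q)"
proof -
  let ?Q = "set (take p x)" and ?u = "st (take p x)" and ?v = "st (drop p x)"
  have Q: "?Q \<subseteq> {1..p+q}" "card ?Q = p"
    using x i set_perm[OF x] length_perm[OF x] distinct_perm[OF x]
    by (auto simp: distinct_card dest: in_set_takeD)
  interpret insertion p q ?Q using Q by unfold_locales
  have x_eq: "ins ?u ?v = x" using phi_eqI[OF x] by simp
  have "?u \<in> perms p" "?v \<in> perms q"
    using st_perm[of "take p x"] st_perm[of "drop p x"] distinct_perm[OF x] length_perm[OF x] i by auto
  then have "ins (swap_adj ?u i) ?v = swap_adj x i" using ins_swap_adj_left x_eq i by metis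
  then show ?thesis using cong_phi[OF Q cong cong_refl[OF \<open>?v \<in> perms q\<close>]] x_eq by simp
qed

lemma cong_swap_adj_drop:
  assumes x: "x \<in> perms (p+q)" and i: "Suc i < q"
    and cong: "(st (drop p x), swap_adj (st (drop p x)) i) \<in> \<Theta> q"
  shows "(x, swap_adj x (p+i)) \<in> \<Theta> (p+q)"
proof -
  let ?Q = "set (take p x)" and ?u = "st (take p x)" and ?v = "st (drop p x)"
  have Q: "?Q \<subseteq> {1..p+q}" "card ?Q = p"
    using x i set_perm[OF x] length_perm[OF x] distinct_perm[OF x]
    by (auto simp: distinct_card dest: in_set_takeD)
  interpret insertion p q ?Q using Q by unfold_locales
  have x_eq: "ins ?u ?v = x" using phi_eqI[OF x] by simp
  have "?u \<in> perms p" "?v \<in> perms q"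
    using st_perm[of "take p x"] st_perm[of "drop p x"] distinct_perm[OF x] length_perm[OF x] i by auto
  then have "ins ?u (swap_adj ?v i) = swap_adj x (p+i)" using ins_swap_adj_right x_eq i by metis
  then show ?thesis using cong_phi[OF Q cong_refl[OF \<open>?u \<in> perms p\<close>] cong] x_eq by simp
qed

lemma cong_swap_adj_consecutive:
  assumes y: "y \<in> perms n" and tw: "twisted_at y (i - 1) i (i + 2)" and i: "0 < i"
  shows "(y, swap_adj y i) \<in> \<Theta> n"
proof -
  define m where "m = i - 1"
  define w where "w = st (drop m y)"
  have len: "length y = n" using length_perm[OF y] .
  have N: "4 \<le> n - m" "m + (n - m) = n" using tw len i unfolding twisted_at_def m_def by auto
  have w: "w \<in> perms (4 + (n - m - 4))"
    using st_perm[of "drop m y"] distinct_perm[OF y] len N unfolding w_def by simp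
  have "take 4 (drop m y) = [y!(i-1), y!i, y!Suc i, y!(i+2)]"
    using N len i unfolding m_def by (simp add: take_Suc_conv_app_nth numeral_eq_Suc)
  moreover have "y!(i-1) \<noteq> y!(i+2)"
    using tw distinct_perm[OF y] len unfolding twisted_at_def by (simp add: nth_eq_iff_index_eq)
  ultimately have G: "st (take 4 w) = [2,4,1,3] \<or> st (take 4 w) = [3,4,1,2]"
    using st_twisted_four[of "y!Suc i" "y!(i-1)" "y!i" "y!(i+2)"] tw
    unfolding w_def st_take_st twisted_at_def by auto
  have "(w, swap_adj w 1) \<in> \<Theta> (4 + (n - m - 4))"
    using cong_swap_adj_take[OF w _ cong_swap_adj_pattern[OF G]] by simp
  then have "(y, swap_adj y (m + 1)) \<in> \<Theta> (m + (n - m))"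
    using cong_swap_adj_drop[of y m "n - m" 1] y N unfolding w_def by simp
  then show ?thesis using N i unfolding m_def by simp
qed

text \<open>For \<open>j\<close> far from \<open>i\<close>, the congruence of \<open>y\<close> and its swap at \<open>i\<close> is transported along the
  swap at \<open>j\<close>: by a join with \<open>swap_adj y j\<close> if \<open>j\<close> is an ascent of \<open>y\<close>, and by a meet otherwise.\<close>

lemma cong_swap_adj_transport:
  assumes y: "y \<in> perms n" and i: "Suc i < n" and desc: "y!Suc i < y!i"
    and cong: "(y, swap_adj y i) \<in> \<Theta> n" and j: "Suc j < n" and far: "Suc j < i \<or> Suc i < j"
  shows "(swap_adj y j, swap_adj (swap_adj y i) j) \<in> \<Theta> n"
proof -
  let ?y' = "swap_adj y i" and ?z = "swap_adj y j" and ?z' = "swap_adj (swap_adj y i) j"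
  have len: "length y = n" using length_perm[OF y] .
  have y': "?y' \<in> perms n" and z: "?z \<in> perms n" and z': "?z' \<in> perms n"
    using perm_swap_adj y i j by auto
  have inv_y': "inv_pairs ?y' = inv_pairs y - {(y!Suc i, y!i)}"
    using inv_pairs_swap_adj_desc[OF y i desc] .
  have same: "?y'!j = y!j" "?y'!Suc j = y!Suc j"
    using nth_swap_adj[of i y] len i j far by (auto simp: Transposition.transpose_def)
  have "y!j \<noteq> y!Suc j" using distinct_perm[OF y] len j by (simp add: nth_eq_iff_index_eq)
  then consider "y!j < y!Suc j" | "y!Suc j < y!j" by linarith
  then show ?thesis
  proof cases
    case 1
    have "inv_pairs ?z = inv_pairs y \<union> {(y!j, y!Suc j)}"
      "inv_pairs ?z' = inv_pairs ?y' \<union> {(y!j, y!Suc j)}"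
      using inv_pairs_swap_adj_asc[OF y j 1] inv_pairs_swap_adj_asc[OF y' j] same 1 by auto
    then have "weak_join n y ?z' = ?z" "weak_join n ?y' ?z' = ?z'"
      using weak_join_eqI[OF y z' z] weak_join_eqI[OF y' z' z'] inv_y' by auto
    then show ?thesis using cong_weak_join[OF cong_sym[OF cong] z'] cong_sym by simp
  next
    case 2
    have "inv_pairs ?z = inv_pairs y - {(y!Suc j, y!j)}"
      "inv_pairs ?z' = inv_pairs ?y' - {(y!Suc j, y!j)}"
      using inv_pairs_swap_adj_desc[OF y j 2] inv_pairs_swap_adj_desc[OF y' j] same 2 by auto
    then have "weak_meet n y ?z = ?z" "weak_meet n ?y' ?z = ?z'"
      using weak_meet_eqI[OF y z z] weak_meet_eqI[OF y' z z'] inv_y' by auto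
    then show ?thesis using cong_weak_meet[OF cong z] by simp
  qed
qed

lemma cong_swap_adj_from_neighbour:
  assumes y: "y \<in> perms n" and tw: "twisted_at (swap_adj y j) k i l"
    and cong: "(swap_adj y j, swap_adj (swap_adj y j) i) \<in> \<Theta> n"
    and j: "Suc j < n" and far: "Suc j < i \<or> Suc i < j"
  shows "(y, swap_adj y i) \<in> \<Theta> n"
proof -
  have len: "length y = n" using length_perm[OF y] .
  have i: "Suc i < n" using tw len unfolding twisted_at_def by simp
  have "(swap_adj (swap_adj y j) j, swap_adj (swap_adj (swap_adj y j) i) j) \<in> \<Theta> n"
    using cong_swap_adj_transport[OF perm_swap_adj[OF y j] i _ cong j far] tw
    unfolding twisted_at_def by simp
  moreover have "swap_adj (swap_adj (swap_adj y j) i) j = swap_adj y i"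
    using swap_adj_commute[of i "swap_adj y j" j] swap_adj_swap_adj[of j y] len i j far by auto
  ultimately show ?thesis using swap_adj_swap_adj[of j y] len j by simp
qed

text \<open>Moving an outer letter of the pattern one step towards the adjacent pair keeps the pattern,
  so induction on their distance reduces to consecutive positions.\<close>

lemma cong_swap_adj_twisted:
  "y \<in> perms n \<Longrightarrow> twisted_at y k i l \<Longrightarrow> (y, swap_adj y i) \<in> \<Theta> n"
proof (induction "(i - Suc k) + (l - Suc (Suc i))" arbitrary: y k l rule: less_induct)
  case less
  note y = less.prems(1) and tw = less.prems(2)
  have len: "length y = n" using length_perm[OF y] .
  consider "Suc k < i" | "k = i - 1" "l = i + 2" | "k = i - 1" "Suc (Suc (Suc i)) \<le> l"
    using tw unfolding twisted_at_def by linarith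
  then show ?case
  proof cases
    case 1
    let ?y0 = "swap_adj y k"
    have "twisted_at ?y0 (Suc k) i l"
      using tw 1 len nth_swap_adj[of k y] unfolding twisted_at_def
      by (auto simp: Transposition.transpose_def)
    moreover from this have "(?y0, swap_adj ?y0 i) \<in> \<Theta> n"
      using less.hyps[of "Suc k" l ?y0] perm_swap_adj[OF y, of k] 1 tw len
      unfolding twisted_at_def by auto
    ultimately show ?thesis
      using cong_swap_adj_from_neighbour[OF y] 1 tw len unfolding twisted_at_def by auto
  next
    case 2
    then show ?thesis using cong_swap_adj_consecutive[OF y] tw unfolding twisted_at_def by auto
  next
    case 3
    let ?y0 = "swap_adj y (l - 1)"
    have "twisted_at ?y0 k i (l - 1)"
      using tw 3 len nth_swap_adj[of "l - 1" y] unfolding twisted_at_def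
      by (auto simp: Transposition.transpose_def)
    moreover from this have "(?y0, swap_adj ?y0 i) \<in> \<Theta> n"
      using less.hyps[of k "l - 1" ?y0] perm_swap_adj[OF y, of "l - 1"] 3 tw len
      unfolding twisted_at_def by auto
    ultimately show ?thesis
      using cong_swap_adj_from_neighbour[OF y] 3 tw len unfolding twisted_at_def by auto
  qed
qed

lemma tb_steps_cong: "(tb_step n)\<^sup>*\<^sup>* x t \<Longrightarrow> x \<in> perms n \<Longrightarrow> (x,t) \<in> \<Theta> n"
proof (induction rule: rtranclp_induct)
  case base
  then show ?case by (rule cong_refl)
next
  case (step y z)
  then have "(y,z) \<in> \<Theta> n"
    using cong_swap_adj_twisted tb_steps_tb_cong tb_cong_perms unfolding tb_step_def by blast
  then show ?case using step cong_trans by blast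
qed

lemma tb_cong_subset: "tb_cong n \<subseteq> \<Theta> n"
proof clarify
  fix x y assume xy: "(x,y) \<in> tb_cong n"
  obtain t where "(tb_step n)\<^sup>*\<^sup>* x t" "(tb_step n)\<^sup>*\<^sup>* y t" using common_tb_reduct[OF xy] .
  then show "(x,y) \<in> \<Theta> n" using tb_steps_cong tb_cong_perms[OF xy] cong_sym cong_trans by meson
qed

end

lemma H_gen_eq_tb_cong: "H_gen {[3,4,1,2], [2,4,1,3]} n = tb_cong n"
proof
  show "H_gen {[3,4,1,2], [2,4,1,3]} n \<subseteq> tb_cong n"
    unfolding H_gen_def using H_family_tb_cong contracts_tb_cong by blast
  show "tb_cong n \<subseteq> H_gen {[3,4,1,2], [2,4,1,3]} n"
    unfolding H_gen_def
    using contracting_H_family.tb_cong_subset contracting_H_family.intro by blast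
qed

section \<open>The quotient\<close>

definition tb_rep :: "nat list set \<Rightarrow> nat list" where
  "tb_rep A = (THE t. t \<in> A \<and> twisted_baxter t)"

lemma tb_rep:
  assumes A: "A \<in> perms n // tb_cong n"
  shows "tb_rep A \<in> A" "twisted_baxter (tb_rep A)" "\<And>t. t \<in> A \<Longrightarrow> twisted_baxter t \<Longrightarrow> t = tb_rep A"
proof -
  obtain x where x: "x \<in> perms n" "A = tb_cong n `` {x}" using A by (rule quotientE)
  obtain t where t: "twisted_baxter t" "(tb_step n)\<^sup>*\<^sup>* x t" using tb_steps_to_twisted_baxter[OF x(1)] by blast
  have tA: "t \<in> A" using tb_steps_tb_cong[OF t(2) x(1)] x(2) by auto
  have unique: "s = t" if "s \<in> A" "twisted_baxter s" for s
  proof -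
    have "(x,s) \<in> tb_cong n" "(x,t) \<in> tb_cong n" using that tA x(2) by auto
    then have "(s,t) \<in> tb_cong n" using tb_cong_sym tb_cong_trans by blast
    then show ?thesis using twisted_baxter_tb_cong_unique that(2) t(1) by blast
  qed
  have rep: "tb_rep A = t" unfolding tb_rep_def using tA t(1) unique by blast
  show "tb_rep A \<in> A" "twisted_baxter (tb_rep A)" using tA t(1) unfolding rep by simp_all
  show "\<And>s. s \<in> A \<Longrightarrow> twisted_baxter s \<Longrightarrow> s = tb_rep A" using unique unfolding rep by blast
qed

lemma bij_betw_tb_rep: "bij_betw tb_rep (perms n // tb_cong n) {x \<in> perms n. twisted_baxter x}"
proof (rule bij_betw_imageI)
  show "inj_on tb_rep (perms n // tb_cong n)"
  proof (rule inj_onI)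
    fix A B assume A: "A \<in> perms n // tb_cong n" and B: "B \<in> perms n // tb_cong n"
      and eq: "tb_rep A = tb_rep B"
    then have "tb_rep A \<in> A \<inter> B" using tb_rep(1)[OF A] tb_rep(1)[OF B] by auto
    then show "A = B" using quotient_disj[OF equiv_tb_cong A B] by auto
  qed
  show "tb_rep ` (perms n // tb_cong n) = {x \<in> perms n. twisted_baxter x}"
  proof
    show "tb_rep ` (perms n // tb_cong n) \<subseteq> {x \<in> perms n. twisted_baxter x}"
    proof (rule image_subsetI)
      fix A assume A: "A \<in> perms n // tb_cong n"
      then have "A \<subseteq> perms n" using in_quotient_imp_subset[OF equiv_tb_cong] by blast
      then show "tb_rep A \<in> {x \<in> perms n. twisted_baxter x}" using tb_rep(1,2)[OF A] by auto
    qed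
    show "{x \<in> perms n. twisted_baxter x} \<subseteq> tb_rep ` (perms n // tb_cong n)"
    proof clarify
      fix t assume t: "t \<in> perms n" "twisted_baxter t"
      then have "tb_cong n `` {t} \<in> perms n // tb_cong n" "t \<in> tb_cong n `` {t}"
        using quotientI[of t "perms n" "tb_cong n"] unfolding tb_cong_def by auto
      then show "t \<in> tb_rep ` (perms n // tb_cong n)" using tb_rep(3) t(2) by blast
    qed
  qed
qed

lemma quot_le_iff_weak_le_tb_rep:
  assumes A: "A \<in> perms n // tb_cong n" and B: "B \<in> perms n // tb_cong n"
  shows "quot_le A B \<longleftrightarrow> weak_le (tb_rep A) (tb_rep B)"
proof
  assume "weak_le (tb_rep A) (tb_rep B)"
  then show "quot_le A B" unfolding quot_le_def using tb_rep(1)[OF A] tb_rep(1)[OF B] by blast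
next
  assume "quot_le A B"
  then obtain x y where xy: "x \<in> A" "y \<in> B" "weak_le x y" unfolding quot_le_def by blast
  have a: "(tb_rep A, x) \<in> tb_cong n" using tb_rep(1)[OF A] xy(1) A
    by (metis equiv_tb_cong quotient_eq_iff)
  have b: "(tb_rep B, y) \<in> tb_cong n" using tb_rep(1)[OF B] xy(2) B
    by (metis equiv_tb_cong quotient_eq_iff)
  have "low_fan (inv_pairs (tb_rep A)) \<subseteq> low_fan (inv_pairs (tb_rep B))"
    "high_fan (inv_pairs (tb_rep A)) \<subseteq> high_fan (inv_pairs (tb_rep B))"
    using a b xy(3) low_fan_mono high_fan_mono unfolding tb_cong_def weak_le_def by auto
  then show "weak_le (tb_rep A) (tb_rep B)"
    using twisted_baxter_weak_le_if_fans_subset tb_rep(2)[OF A] tb_cong_perms a b by blast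
qed

theorem theorem9p7:
  fixes n :: nat
  shows "\<exists>f. bij_betw f (perms n // H_gen {[3,4,1,2], [2,4,1,3]} n)
                         {x \<in> perms n. twisted_baxter x} \<and>
             (\<forall>A \<in> perms n // H_gen {[3,4,1,2], [2,4,1,3]} n.
              \<forall>B \<in> perms n // H_gen {[3,4,1,2], [2,4,1,3]} n.
                quot_le A B \<longleftrightarrow> weak_le (f A) (f B))"
  unfolding H_gen_eq_tb_cong using bij_betw_tb_rep quot_le_iff_weak_le_tb_rep by blast

end
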